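(* Let $G$ be a discrete group acting from the left on a set $S$, and regard $\ell^1(S)$ as a Banach $\ell^1(G)$-bimodule with left action $e_g\cdot\delta_s=\delta_{g\cdot s}$ and trivial right action $\delta_s\cdot e_g=\delta_s$. Suppose every stabilizer subgroup $\mathrm{Stab}_G(s)$, $s\in S$, is amenable. Then $H^n(\ell^1(G),\ell^1(S)')=0$ for all $n\ge1$.
   Context: $\ell^1(G)$ is the convolution algebra of the discrete group $G$ with basis $(e_g)$; $H^n(A,M)$ denotes Hochschild cohomology of a Banach algebra $A$ with coefficients in a Banach $A$-bimodule $M$ (bounded $n$-linear cochains, standard coboundary), and $M'$ carries the adjoint bimodule structure. *)

theory Defs
  imports "HOL-Analysis.Analysis" "HOL-Algebra.Group_Action"
begin

definition bounded_on :: "'a set \<Rightarrow> ('a \<Rightarrow> real) \<Rightarrow> bool" where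
  "bounded_on A f \<longleftrightarrow> (\<exists>B. \<forall>x\<in>A. \<bar>f x\<bar> \<le> B)"

definition amenable_group :: "('g, 'b) monoid_scheme \<Rightarrow> bool" where
  "amenable_group G \<longleftrightarrow> (\<exists>m :: ('g \<Rightarrow> real) \<Rightarrow> real.
      (\<forall>f g. bounded_on (carrier G) f \<longrightarrow> (\<forall>x\<in>carrier G. f x = g x) \<longrightarrow> m f = m g) \<and>
      (\<forall>f g. bounded_on (carrier G) f \<longrightarrow> bounded_on (carrier G) g \<longrightarrow>
               m (\<lambda>x. f x + g x) = m f + m g) \<and>
      (\<forall>c f. bounded_on (carrier G) f \<longrightarrow> m (\<lambda>x. c * f x) = c * m f) \<and>
      (\<forall>f. bounded_on (carrier G) f \<longrightarrow> (\<forall>x\<in>carrier G. f x \<ge> 0) \<longrightarrow> m f \<ge> 0) \<and>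
      m (\<lambda>x. 1) = 1 \<and>
      (\<forall>h\<in>carrier G. \<forall>f. bounded_on (carrier G) f \<longrightarrow>
               m (\<lambda>x. f (h \<otimes>\<^bsub>G\<^esub> x)) = m f))"

definition l1 :: "'a set \<Rightarrow> ('a \<Rightarrow> complex) set" where
  "l1 I = {f. (\<forall>x. x \<notin> I \<longrightarrow> f x = 0) \<and> (\<lambda>x. norm (f x)) summable_on I}"

definition l1norm :: "'a set \<Rightarrow> ('a \<Rightarrow> complex) \<Rightarrow> real" where
  "l1norm I f = infsum (\<lambda>x. norm (f x)) I"

definition conv :: "('g, 'b) monoid_scheme \<Rightarrow> ('g \<Rightarrow> complex) \<Rightarrow> ('g \<Rightarrow> complex) \<Rightarrow> 'g \<Rightarrow> complex" where
  "conv G a b = (\<lambda>x. if x \<in> carrier G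
      then infsum (\<lambda>y. a y * b (inv\<^bsub>G\<^esub> y \<otimes>\<^bsub>G\<^esub> x)) (carrier G) else 0)"

text \<open>Left action: e_g . delta_s = delta_(g.s); right action trivial: delta_s . e_g = delta_s.\<close>
definition lact :: "('g, 'b) monoid_scheme \<Rightarrow> 's set \<Rightarrow> ('g \<Rightarrow> 's \<Rightarrow> 's)
    \<Rightarrow> ('g \<Rightarrow> complex) \<Rightarrow> ('s \<Rightarrow> complex) \<Rightarrow> 's \<Rightarrow> complex" where
  "lact G S \<phi> a \<xi> = (\<lambda>s. if s \<in> S
      then infsum (\<lambda>g. a g * \<xi> (\<phi> (inv\<^bsub>G\<^esub> g) s)) (carrier G) else 0)"

definition ract :: "('g, 'b) monoid_scheme \<Rightarrow> ('s \<Rightarrow> complex) \<Rightarrow> ('g \<Rightarrow> complex) \<Rightarrow> 's \<Rightarrow> complex" where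
  "ract G \<xi> a = (\<lambda>s. infsum a (carrier G) * \<xi> s)"

text \<open>Elements of the dual: bounded linear functionals on l1(S). Two functionals are
identified when they agree on l1(S); all equalities below are taken pointwise on l1(S).\<close>
definition dual :: "'s set \<Rightarrow> (('s \<Rightarrow> complex) \<Rightarrow> complex) set" where
  "dual S = {F. (\<forall>\<xi>\<in>l1 S. \<forall>\<eta>\<in>l1 S. F (\<lambda>s. \<xi> s + \<eta> s) = F \<xi> + F \<eta>) \<and>
                (\<forall>c. \<forall>\<xi>\<in>l1 S. F (\<lambda>s. c * \<xi> s) = c * F \<xi>) \<and>
                (\<exists>C. \<forall>\<xi>\<in>l1 S. norm (F \<xi>) \<le> C * l1norm S \<xi>)}"

definition dlact :: "('g, 'b) monoid_scheme \<Rightarrow> ('g \<Rightarrow> complex)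
    \<Rightarrow> (('s \<Rightarrow> complex) \<Rightarrow> complex) \<Rightarrow> ('s \<Rightarrow> complex) \<Rightarrow> complex" where
  "dlact G a F = (\<lambda>\<xi>. F (ract G \<xi> a))"

definition dract :: "('g, 'b) monoid_scheme \<Rightarrow> 's set \<Rightarrow> ('g \<Rightarrow> 's \<Rightarrow> 's)
    \<Rightarrow> (('s \<Rightarrow> complex) \<Rightarrow> complex) \<Rightarrow> ('g \<Rightarrow> complex) \<Rightarrow> ('s \<Rightarrow> complex) \<Rightarrow> complex" where
  "dract G S \<phi> F a = (\<lambda>\<xi>. F (lact G S \<phi> a \<xi>))"

text \<open>An n-cochain is a bounded n-linear map from l1(G)^n to l1(S)';
arguments are given as lists of length n.\<close>
definition cochain :: "('g, 'b) monoid_scheme \<Rightarrow> 's set \<Rightarrow> nat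
    \<Rightarrow> (('g \<Rightarrow> complex) list \<Rightarrow> ('s \<Rightarrow> complex) \<Rightarrow> complex) \<Rightarrow> bool" where
  "cochain G S n T \<longleftrightarrow>
     (\<forall>as. length as = n \<longrightarrow> set as \<subseteq> l1 (carrier G) \<longrightarrow> T as \<in> dual S) \<and>
     (\<forall>as i x y. length as = n \<longrightarrow> set as \<subseteq> l1 (carrier G) \<longrightarrow> i < n \<longrightarrow>
        x \<in> l1 (carrier G) \<longrightarrow> y \<in> l1 (carrier G) \<longrightarrow>
        (\<forall>\<xi>\<in>l1 S. T (as[i := (\<lambda>g. x g + y g)]) \<xi> = T (as[i := x]) \<xi> + T (as[i := y]) \<xi>)) \<and>
     (\<forall>as i c x. length as = n \<longrightarrow> set as \<subseteq> l1 (carrier G) \<longrightarrow> i < n \<longrightarrow>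
        x \<in> l1 (carrier G) \<longrightarrow>
        (\<forall>\<xi>\<in>l1 S. T (as[i := (\<lambda>g. c * x g)]) \<xi> = c * T (as[i := x]) \<xi>)) \<and>
     (\<exists>C. \<forall>as. length as = n \<longrightarrow> set as \<subseteq> l1 (carrier G) \<longrightarrow>
        (\<forall>\<xi>\<in>l1 S. norm (T as \<xi>) \<le> C * (\<Prod>a\<leftarrow>as. l1norm (carrier G) a) * l1norm S \<xi>))"

definition merge_at :: "('g, 'b) monoid_scheme \<Rightarrow> nat \<Rightarrow> ('g \<Rightarrow> complex) list \<Rightarrow> ('g \<Rightarrow> complex) list" where
  "merge_at G i as = take i as @ [conv G (as ! i) (as ! Suc i)] @ drop (Suc (Suc i)) as"

definition cobound :: "('g, 'b) monoid_scheme \<Rightarrow> 's set \<Rightarrow> ('g \<Rightarrow> 's \<Rightarrow> 's) \<Rightarrow> nat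
    \<Rightarrow> (('g \<Rightarrow> complex) list \<Rightarrow> ('s \<Rightarrow> complex) \<Rightarrow> complex)
    \<Rightarrow> ('g \<Rightarrow> complex) list \<Rightarrow> ('s \<Rightarrow> complex) \<Rightarrow> complex" where
  "cobound G S \<phi> n T as = (\<lambda>\<xi>.
      dlact G (as ! 0) (T (tl as)) \<xi>
    + (\<Sum>i<n. (-1) ^ (i + 1) * T (merge_at G i as) \<xi>)
    + (-1) ^ (n + 1) * dract G S \<phi> (T (take n as)) (as ! n) \<xi>)"

definition hochschild_vanishes :: "('g, 'b) monoid_scheme \<Rightarrow> 's set \<Rightarrow> ('g \<Rightarrow> 's \<Rightarrow> 's) \<Rightarrow> nat \<Rightarrow> bool" where
  "hochschild_vanishes G S \<phi> n \<longleftrightarrow>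
    (\<forall>T. cochain G S n T \<longrightarrow>
       (\<forall>as. length as = Suc n \<longrightarrow> set as \<subseteq> l1 (carrier G) \<longrightarrow>
          (\<forall>\<xi>\<in>l1 S. cobound G S \<phi> n T as \<xi> = 0)) \<longrightarrow>
       (\<exists>R. cochain G S (n - 1) R \<and>
          (\<forall>as. length as = n \<longrightarrow> set as \<subseteq> l1 (carrier G) \<longrightarrow>
             (\<forall>\<xi>\<in>l1 S. cobound G S \<phi> (n - 1) R as \<xi> = T as \<xi>))))"

end

theory Submission
  imports Defs
begin

text \<open>
  Fix a bounded n-cocycle T.  Choose a representative u of every orbit and, for the
  stabiliser of u, an invariant mean m_u.  For t in the orbit of u pick g_t with
  g_t.u = t and define the orbit mean M_t(\<Phi>) = m_u(h \<mapsto> \<Phi>(g_t h)) of bounded functions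
  \<Phi> on G; invariance of m_u makes M equivariant: M_{g.t}(\<Phi>) = M_t(x \<mapsto> \<Phi>(g x)).
  The primitive is the (n-1)-cochain R with
     R(b)(\<delta>_t) = (-1)^n M_t(x \<mapsto> T(b, \<delta>_x)(\<delta>_{x^-1.t})).
  Evaluating the cocycle identity of T at (a, \<delta>_x) and \<delta>_{x^-1.u} and averaging over x
  with M_u yields (\<delta>R)(a)(\<delta>_u) = T(a)(\<delta>_u); since bounded functionals on l1(S) are
  determined by their values on point masses, \<delta>R = T.
\<close>

definition delta :: "'x \<Rightarrow> 'x \<Rightarrow> complex" where
  "delta a = (\<lambda>s. if s = a then 1 else 0)"

text \<open>Restriction of a function to a subset (zero outside); used to split an l1
  element into a finitely supported part and a small tail.\<close>
definition restrict_to :: "'x set \<Rightarrow> ('x \<Rightarrow> complex) \<Rightarrow> 'x \<Rightarrow> complex" where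
  "restrict_to A \<xi> = (\<lambda>s. if s \<in> A then \<xi> s else 0)"

lemma has_sum_single:
  "((\<lambda>x. if x = a then c else 0) has_sum (if a \<in> I then c else 0)) I"
proof -
  have "((\<lambda>x. if x = a then c else 0) has_sum (sum (\<lambda>x. if x = a then c else 0) ({a} \<inter> I))) ({a} \<inter> I)"
    by (rule has_sum_finite) auto
  also have "sum (\<lambda>x. if x = a then c else 0) ({a} \<inter> I) = (if a \<in> I then c else 0)"
    by (cases "a \<in> I") auto
  finally show ?thesis
    by (rule has_sum_cong_neutral[THEN iffD2, rotated -1]) auto
qed

lemma infsum_single: "infsum (\<lambda>x. if x = a then c else 0) I = (if a \<in> I then c else 0)"
  by (rule infsumI[OF has_sum_single])

lemma l1_normsum: "\<xi> \<in> l1 I \<Longrightarrow> (\<lambda>x. norm (\<xi> x)) summable_on I"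
  unfolding l1_def by blast

lemma l1_out: "\<xi> \<in> l1 I \<Longrightarrow> x \<notin> I \<Longrightarrow> \<xi> x = 0"
  unfolding l1_def by blast

lemma l1I: "(\<And>x. x \<notin> I \<Longrightarrow> \<xi> x = 0) \<Longrightarrow> (\<lambda>x. norm (\<xi> x)) summable_on I \<Longrightarrow> \<xi> \<in> l1 I"
  unfolding l1_def by blast

lemma l1_compare:
  assumes "\<eta> \<in> l1 I" "\<And>x. x \<notin> I \<Longrightarrow> \<xi> x = 0" "\<And>x. x \<in> I \<Longrightarrow> norm (\<xi> x) \<le> B * norm (\<eta> x)"
  shows "\<xi> \<in> l1 I"
proof (rule l1I)
  show "(\<lambda>x. norm (\<xi> x)) summable_on I"
    by (rule summable_on_comparison_test[of "\<lambda>x. B * norm (\<eta> x)"])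
       (use assms summable_on_cmult_right[OF l1_normsum[OF assms(1)]] in auto)
qed (use assms in auto)

lemma l1_add: assumes "\<xi> \<in> l1 I" "\<eta> \<in> l1 I" shows "(\<lambda>s. \<xi> s + \<eta> s) \<in> l1 I"
proof (rule l1I)
  show "(\<lambda>x. norm (\<xi> x + \<eta> x)) summable_on I"
    by (rule summable_on_comparison_test[of "\<lambda>x. norm (\<xi> x) + norm (\<eta> x)"])
       (simp_all add: norm_triangle_ineq summable_on_add[OF l1_normsum[OF assms(1)] l1_normsum[OF assms(2)]])
qed (use l1_out[OF assms(1)] l1_out[OF assms(2)] in simp)

lemma l1_scale: assumes "\<xi> \<in> l1 I" shows "(\<lambda>s. c * \<xi> s) \<in> l1 I"
  by (rule l1_compare[of \<xi> _ _ "norm c"]) (use assms l1_out[OF assms] in \<open>simp_all add: norm_mult\<close>)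

lemma l1_zero: "(\<lambda>s. 0) \<in> l1 I"
  by (rule l1I) auto

lemma l1_restrict_to: assumes "\<xi> \<in> l1 I" shows "restrict_to A \<xi> \<in> l1 I"
  by (rule l1_compare[of \<xi> _ _ 1]) (use assms l1_out[OF assms] in \<open>simp_all add: restrict_to_def\<close>)

lemma norm_delta: "(\<lambda>x. norm (delta a x)) = (\<lambda>x. if x = a then 1 else 0)"
  by (auto simp: delta_def)

lemma l1_delta: "a \<in> I \<Longrightarrow> delta a \<in> l1 I"
proof (rule l1I)
  show "(\<lambda>x. norm (delta a x)) summable_on I"
    unfolding norm_delta summable_on_def by (rule exI, rule has_sum_single)
qed (auto simp: delta_def)

lemma l1norm_delta: "a \<in> I \<Longrightarrow> l1norm I (delta a) = 1"
  unfolding l1norm_def norm_delta by (simp add: infsum_single)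

lemma l1norm_nonneg: "0 \<le> l1norm I \<xi>"
  unfolding l1norm_def by (simp add: infsum_nonneg)

lemma l1norm_prod_nonneg: "0 \<le> (\<Prod>a\<leftarrow>as. l1norm I a)"
  by (rule prod_list_nonneg) (auto simp: l1norm_nonneg)

lemma l1norm_ge: "\<xi> \<in> l1 I \<Longrightarrow> t \<in> I \<Longrightarrow> norm (\<xi> t) \<le> l1norm I \<xi>"
  unfolding l1norm_def
  using finite_sum_le_infsum[of "\<lambda>x. norm (\<xi> x)" I "{t}"] l1_normsum by auto

section \<open>Bounded functionals on l1(I)\<close>

lemma dualI:
  assumes "\<And>\<xi> \<eta>. \<xi> \<in> l1 I \<Longrightarrow> \<eta> \<in> l1 I \<Longrightarrow> F (\<lambda>s. \<xi> s + \<eta> s) = F \<xi> + F \<eta>"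
    "\<And>c \<xi>. \<xi> \<in> l1 I \<Longrightarrow> F (\<lambda>s. c * \<xi> s) = c * F \<xi>"
    "\<And>\<xi>. \<xi> \<in> l1 I \<Longrightarrow> norm (F \<xi>) \<le> C * l1norm I \<xi>"
  shows "F \<in> dual I"
  using assms unfolding dual_def by blast

lemma dual_add: "F \<in> dual I \<Longrightarrow> \<xi> \<in> l1 I \<Longrightarrow> \<eta> \<in> l1 I \<Longrightarrow> F (\<lambda>s. \<xi> s + \<eta> s) = F \<xi> + F \<eta>"
  unfolding dual_def by blast

lemma dual_scale: "F \<in> dual I \<Longrightarrow> \<xi> \<in> l1 I \<Longrightarrow> F (\<lambda>s. c * \<xi> s) = c * F \<xi>"
  unfolding dual_def by blast

lemma dual_zero: "F \<in> dual I \<Longrightarrow> F (\<lambda>s. 0) = 0"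
  using dual_scale[OF _ l1_zero, of F I 0] by simp

lemma dual_bound: "F \<in> dual I \<Longrightarrow> \<exists>C\<ge>0. \<forall>\<xi>\<in>l1 I. norm (F \<xi>) \<le> C * l1norm I \<xi>"
proof -
  assume "F \<in> dual I"
  then obtain C where C: "\<forall>\<xi>\<in>l1 I. norm (F \<xi>) \<le> C * l1norm I \<xi>" unfolding dual_def by blast
  have "C * l1norm I \<xi> \<le> max C 0 * l1norm I \<xi>" for \<xi>
    by (rule mult_right_mono) (simp_all add: l1norm_nonneg)
  then have "\<forall>\<xi>\<in>l1 I. norm (F \<xi>) \<le> max C 0 * l1norm I \<xi>"
    using C by (meson order_trans)
  then show ?thesis by (intro exI[of _ "max C 0"]) simp
qed

lemma dual_restrict_finite:
  assumes F: "F \<in> dual I" and xi: "\<xi> \<in> l1 I"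
  shows "finite A \<Longrightarrow> A \<subseteq> I \<Longrightarrow> F (restrict_to A \<xi>) = (\<Sum>t\<in>A. \<xi> t * F (delta t))"
proof (induction A rule: finite_induct)
  case empty
  have "restrict_to {} \<xi> = (\<lambda>s. 0)" by (auto simp: restrict_to_def)
  then show ?case using dual_zero[OF F] by simp
next
  case (insert a A)
  have split: "restrict_to (insert a A) \<xi> = (\<lambda>s. restrict_to A \<xi> s + \<xi> a * delta a s)"
    using insert(2) by (auto simp: restrict_to_def delta_def)
  have "F (restrict_to (insert a A) \<xi>) = F (restrict_to A \<xi>) + F (\<lambda>s. \<xi> a * delta a s)"
    unfolding split using insert l1_restrict_to[OF xi] l1_scale[OF l1_delta]
    by (intro dual_add[OF F]) auto
  also have "F (\<lambda>s. \<xi> a * delta a s) = \<xi> a * F (delta a)"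
    using insert l1_delta by (intro dual_scale[OF F]) auto
  finally show ?case using insert by simp
qed

lemma l1norm_restrict_compl:
  assumes xi: "\<xi> \<in> l1 I" and A: "finite A" "A \<subseteq> I"
  shows "l1norm I (restrict_to (-A) \<xi>) = l1norm I \<xi> - sum (\<lambda>x. norm (\<xi> x)) A"
proof -
  have s: "(\<lambda>x. norm (restrict_to A \<xi> x)) summable_on I" "(\<lambda>x. norm (restrict_to (-A) \<xi> x)) summable_on I"
    by (rule l1_normsum[OF l1_restrict_to[OF xi]])+
  have "l1norm I \<xi> = infsum (\<lambda>x. norm (restrict_to A \<xi> x) + norm (restrict_to (-A) \<xi> x)) I"
    unfolding l1norm_def by (rule infsum_cong) (auto simp: restrict_to_def)
  also have "\<dots> = infsum (\<lambda>x. norm (restrict_to A \<xi> x)) I + l1norm I (restrict_to (-A) \<xi>)"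
    unfolding l1norm_def by (rule infsum_add[OF s])
  also have "infsum (\<lambda>x. norm (restrict_to A \<xi> x)) I = infsum (\<lambda>x. norm (restrict_to A \<xi> x)) A"
    by (rule infsum_cong_neutral) (use A in \<open>auto simp: restrict_to_def\<close>)
  also have "\<dots> = sum (\<lambda>x. norm (\<xi> x)) A" using A by (simp add: restrict_to_def)
  finally show ?thesis by simp
qed

lemma dual_expansion:
  assumes F: "F \<in> dual I" and xi: "\<xi> \<in> l1 I"
  shows "((\<lambda>t. \<xi> t * F (delta t)) has_sum F \<xi>) I"
proof -
  obtain C where C: "C \<ge> 0" "\<forall>\<xi>\<in>l1 I. norm (F \<xi>) \<le> C * l1norm I \<xi>"
    using dual_bound[OF F] by blast
  let ?N = "l1norm I \<xi>" and ?f = "\<lambda>t. \<xi> t * F (delta t)"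
  have tail: "norm (F \<xi> - sum ?f A) \<le> C * (?N - sum (\<lambda>x. norm (\<xi> x)) A)"
    if A: "finite A" "A \<subseteq> I" for A
  proof -
    have split: "\<xi> = (\<lambda>s. restrict_to A \<xi> s + restrict_to (-A) \<xi> s)"
      by (auto simp: restrict_to_def)
    have "F \<xi> = F (restrict_to A \<xi>) + F (restrict_to (-A) \<xi>)"
      by (subst split, rule dual_add[OF F]) (auto intro: l1_restrict_to xi)
    then have "F \<xi> - sum ?f A = F (restrict_to (-A) \<xi>)"
      using dual_restrict_finite[OF F xi A] by simp
    moreover have "norm (F (restrict_to (-A) \<xi>)) \<le> C * l1norm I (restrict_to (-A) \<xi>)"
      using C(2) l1_restrict_to[OF xi] by blast
    ultimately show ?thesis using l1norm_restrict_compl[OF xi A] by simp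
  qed
  have "(sum (\<lambda>x. norm (\<xi> x)) \<longlongrightarrow> ?N) (finite_subsets_at_top I)"
    using l1_normsum[OF xi] unfolding l1norm_def has_sum_def[symmetric] by simp
  then have "((\<lambda>A. C * (?N - sum (\<lambda>x. norm (\<xi> x)) A)) \<longlongrightarrow> C * (?N - ?N)) (finite_subsets_at_top I)"
    by (intro tendsto_intros)
  then have "((\<lambda>A. C * (?N - sum (\<lambda>x. norm (\<xi> x)) A)) \<longlongrightarrow> 0) (finite_subsets_at_top I)"
    by simp
  then have "((\<lambda>A. F \<xi> - sum ?f A) \<longlongrightarrow> 0) (finite_subsets_at_top I)"
    by (rule Lim_null_comparison[rotated]) (auto intro!: eventually_finite_subsets_at_top_weakI tail)
  then have "((\<lambda>A. F \<xi> - (F \<xi> - sum ?f A)) \<longlongrightarrow> F \<xi> - 0) (finite_subsets_at_top I)"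
    by (intro tendsto_intros)
  then show ?thesis unfolding has_sum_def by simp
qed

lemma dual_eq_on_deltas:
  assumes "F \<in> dual I" "H \<in> dual I" "\<And>t. t \<in> I \<Longrightarrow> F (delta t) = H (delta t)" "\<xi> \<in> l1 I"
  shows "F \<xi> = H \<xi>"
proof -
  have "((\<lambda>t. \<xi> t * F (delta t)) has_sum H \<xi>) I"
    using dual_expansion[OF assms(2,4)] by (rule has_sum_cong[THEN iffD1, rotated]) (simp add: assms(3))
  then show ?thesis using has_sum_unique[OF dual_expansion[OF assms(1,4)]] by simp
qed

lemma dual_cong:
  assumes "F \<in> dual I" "\<And>\<xi>. \<xi> \<in> l1 I \<Longrightarrow> H \<xi> = F \<xi>"
  shows "H \<in> dual I"
proof -
  obtain C where C: "\<forall>\<xi>\<in>l1 I. norm (F \<xi>) \<le> C * l1norm I \<xi>" using dual_bound[OF assms(1)] by blast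
  show ?thesis
  proof (rule dualI[where C=C])
    fix \<xi> \<eta> assume "\<xi> \<in> l1 I" "\<eta> \<in> l1 I"
    then show "H (\<lambda>s. \<xi> s + \<eta> s) = H \<xi> + H \<eta>"
      using assms(2)[OF l1_add] assms(2) dual_add[OF assms(1)] by simp
  next
    fix c \<xi> assume "\<xi> \<in> l1 I"
    then show "H (\<lambda>s. c * \<xi> s) = c * H \<xi>"
      using assms(2)[OF l1_scale] assms(2) dual_scale[OF assms(1)] by simp
  qed (use assms(2) C in simp)
qed

lemma dual_cmult: "F \<in> dual I \<Longrightarrow> (\<lambda>\<xi>. c * F \<xi>) \<in> dual I"
proof -
  assume F: "F \<in> dual I"
  obtain C where C: "\<forall>\<xi>\<in>l1 I. norm (F \<xi>) \<le> C * l1norm I \<xi>" using dual_bound[OF F] by blast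
  show ?thesis
    by (rule dualI[where C="norm c * C"])
       (use C in \<open>simp_all add: dual_add[OF F] dual_scale[OF F] distrib_left norm_mult mult.assoc mult_left_mono\<close>)
qed

lemma dual_plus: "F \<in> dual I \<Longrightarrow> H \<in> dual I \<Longrightarrow> (\<lambda>\<xi>. F \<xi> + H \<xi>) \<in> dual I"
proof -
  assume F: "F \<in> dual I" and H: "H \<in> dual I"
  obtain C1 where C1: "\<forall>\<xi>\<in>l1 I. norm (F \<xi>) \<le> C1 * l1norm I \<xi>" using dual_bound[OF F] by blast
  obtain C2 where C2: "\<forall>\<xi>\<in>l1 I. norm (H \<xi>) \<le> C2 * l1norm I \<xi>" using dual_bound[OF H] by blast
  have "norm (F \<xi> + H \<xi>) \<le> (C1 + C2) * l1norm I \<xi>" if "\<xi> \<in> l1 I" for \<xi>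
  proof -
    have "norm (F \<xi>) \<le> C1 * l1norm I \<xi>" "norm (H \<xi>) \<le> C2 * l1norm I \<xi>" using C1 C2 that by auto
    then show ?thesis using norm_triangle_ineq[of "F \<xi>" "H \<xi>"] by (simp add: distrib_right)
  qed
  then show ?thesis
    by (intro dualI[where C="C1+C2"]) (simp_all add: dual_add[OF F] dual_add[OF H] dual_scale[OF F] dual_scale[OF H] distrib_left)
qed

lemma dual_sum: "finite A \<Longrightarrow> (\<And>i. i \<in> A \<Longrightarrow> F i \<in> dual I) \<Longrightarrow> (\<lambda>\<xi>. \<Sum>i\<in>A. F i \<xi>) \<in> dual I"
proof (induction A rule: finite_induct)
  case empty
  show ?case by (rule dualI[where C=0]) (simp_all add: l1norm_nonneg)
next
  case (insert a A)
  then show ?case using dual_plus[of "F a" I "\<lambda>\<xi>. \<Sum>i\<in>A. F i \<xi>"] by simp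
qed

text \<open>A bounded coefficient function r defines the bounded functional
  \<xi> \<mapsto> \<Sum>_t \<xi>(t) r(t); this is how the primitive of a cocycle is built.\<close>
definition pairing :: "'x set \<Rightarrow> ('x \<Rightarrow> complex) \<Rightarrow> ('x \<Rightarrow> complex) \<Rightarrow> complex" where
  "pairing I r \<xi> = infsum (\<lambda>t. \<xi> t * r t) I"

context
  fixes I :: "'x set" and r :: "'x \<Rightarrow> complex" and B :: real
  assumes r_bounded: "\<And>t. t \<in> I \<Longrightarrow> norm (r t) \<le> B"
begin

lemma pairing_abs_summable: "\<xi> \<in> l1 I \<Longrightarrow> (\<lambda>t. norm (\<xi> t * r t)) summable_on I"
proof (rule summable_on_comparison_test[of "\<lambda>t. norm (\<xi> t) * B"])
  assume "\<xi> \<in> l1 I"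
  then show "(\<lambda>t. norm (\<xi> t) * B) summable_on I" by (rule summable_on_cmult_left[OF l1_normsum])
qed (auto simp: norm_mult intro: mult_left_mono r_bounded)

lemma pairing_summable: "\<xi> \<in> l1 I \<Longrightarrow> (\<lambda>t. \<xi> t * r t) summable_on I"
  using pairing_abs_summable summable_on_iff_abs_summable_on_complex by blast

lemma pairing_bound: "\<xi> \<in> l1 I \<Longrightarrow> norm (pairing I r \<xi>) \<le> B * l1norm I \<xi>"
proof -
  assume x: "\<xi> \<in> l1 I"
  have "norm (pairing I r \<xi>) \<le> infsum (\<lambda>t. norm (\<xi> t * r t)) I"
    unfolding pairing_def by (rule norm_infsum_bound[OF pairing_abs_summable[OF x]])
  also have "\<dots> \<le> infsum (\<lambda>t. norm (\<xi> t) * B) I"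
    by (rule infsum_mono[OF pairing_abs_summable[OF x] summable_on_cmult_left[OF l1_normsum[OF x]]])
       (auto simp: norm_mult intro: mult_left_mono r_bounded)
  also have "\<dots> = l1norm I \<xi> * B"
    unfolding l1norm_def by (rule infsum_cmult_left) (use l1_normsum[OF x] in auto)
  finally show ?thesis by (simp add: mult.commute)
qed

lemma pairing_dual: "pairing I r \<in> dual I"
proof (rule dualI[where C=B])
  fix \<xi> \<eta> assume x: "\<xi> \<in> l1 I" "\<eta> \<in> l1 I"
  show "pairing I r (\<lambda>s. \<xi> s + \<eta> s) = pairing I r \<xi> + pairing I r \<eta>"
    unfolding pairing_def distrib_right by (rule infsum_add[OF pairing_summable[OF x(1)] pairing_summable[OF x(2)]])
next
  fix c \<xi> assume x: "\<xi> \<in> l1 I"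
  show "pairing I r (\<lambda>s. c * \<xi> s) = c * pairing I r \<xi>"
    unfolding pairing_def mult.assoc by (rule infsum_cmult_right[OF pairing_summable[OF x]])
qed (rule pairing_bound)

lemma pairing_delta: "u \<in> I \<Longrightarrow> pairing I r (delta u) = r u"
proof -
  assume u: "u \<in> I"
  have "pairing I r (delta u) = infsum (\<lambda>t. if t = u then r u else 0) I"
    unfolding pairing_def by (rule infsum_cong) (simp add: delta_def)
  then show ?thesis using u by (simp add: infsum_single)
qed

end

lemma pairing_add_coeff:
  assumes "\<xi> \<in> l1 I" "\<And>t. t \<in> I \<Longrightarrow> norm (r1 t) \<le> B1" "\<And>t. t \<in> I \<Longrightarrow> norm (r2 t) \<le> B2"
  shows "pairing I (\<lambda>t. r1 t + r2 t) \<xi> = pairing I r1 \<xi> + pairing I r2 \<xi>"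
  unfolding pairing_def distrib_left
  by (rule infsum_add[OF pairing_summable[OF assms(2,1)] pairing_summable[OF assms(3,1)]])

lemma pairing_scale_coeff:
  assumes "\<xi> \<in> l1 I" "\<And>t. t \<in> I \<Longrightarrow> norm (r t) \<le> B"
  shows "pairing I (\<lambda>t. c * r t) \<xi> = c * pairing I r \<xi>"
  unfolding pairing_def mult.left_commute[of _ c]
  by (rule infsum_cmult_right[OF pairing_summable[OF assms(2,1)]])


section \<open>Twisted convolutions\<close>

text \<open>Both the convolution product of l1(G) and the left action of l1(G) on l1(S)
  are instances of the twisted convolution
     (a \<star> \<xi>)(s) = \<Sum>_{g\<in>A} a(g) \<xi>(\<psi>_g s),
  where every \<psi>_g is a bijection of B.\<close>
definition twisted_conv :: "'a set \<Rightarrow> 'b set \<Rightarrow> ('a \<Rightarrow> 'b \<Rightarrow> 'b)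
    \<Rightarrow> ('a \<Rightarrow> complex) \<Rightarrow> ('b \<Rightarrow> complex) \<Rightarrow> 'b \<Rightarrow> complex" where
  "twisted_conv A B \<psi> a \<xi> = (\<lambda>s. if s \<in> B then infsum (\<lambda>g. a g * \<xi> (\<psi> g s)) A else 0)"

lemma infsum_finite_sum_swap:
  fixes f :: "'i \<Rightarrow> 'a \<Rightarrow> 'b::{topological_comm_monoid_add, t2_space}"
  assumes "finite F" "\<And>i. i \<in> F \<Longrightarrow> f i summable_on A"
  shows "(\<lambda>x. \<Sum>i\<in>F. f i x) summable_on A \<and> infsum (\<lambda>x. \<Sum>i\<in>F. f i x) A = (\<Sum>i\<in>F. infsum (f i) A)"
  using assms
proof (induction F rule: finite_induct)
  case (insert a F)
  then have "f a summable_on A" "(\<lambda>x. \<Sum>i\<in>F. f i x) summable_on A"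
    "infsum (\<lambda>x. \<Sum>i\<in>F. f i x) A = (\<Sum>i\<in>F. infsum (f i) A)" by auto
  with insert.hyps show ?case by (simp add: summable_on_add infsum_add)
qed simp

context
  fixes A :: "'a set" and B :: "'b set" and \<psi> :: "'a \<Rightarrow> 'b \<Rightarrow> 'b" and a \<xi>
  assumes a: "a \<in> l1 A" and xi: "\<xi> \<in> l1 B" and bij: "\<And>g. g \<in> A \<Longrightarrow> bij_betw (\<psi> g) B B"
begin

lemma twisted_conv_closed: "g \<in> A \<Longrightarrow> s \<in> B \<Longrightarrow> \<psi> g s \<in> B"
  using bij bij_betwE by blast

lemma twisted_conv_abs_summable:
  "s \<in> B \<Longrightarrow> (\<lambda>g. norm (a g) * norm (\<xi> (\<psi> g s))) summable_on A"
proof (rule summable_on_comparison_test[of "\<lambda>g. norm (a g) * l1norm B \<xi>"])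
  show "(\<lambda>g. norm (a g) * l1norm B \<xi>) summable_on A"
    by (rule summable_on_cmult_left[OF l1_normsum[OF a]])
qed (auto intro!: mult_left_mono l1norm_ge[OF xi] twisted_conv_closed)

lemma twisted_conv_summable: "s \<in> B \<Longrightarrow> (\<lambda>g. a g * \<xi> (\<psi> g s)) summable_on A"
  using twisted_conv_abs_summable[of s]
  by (simp add: summable_on_iff_abs_summable_on_complex norm_mult)

text \<open>Finite partial sums of |a \<star> \<xi>| are bounded by \<Vert>a\<Vert> \<Vert>\<xi>\<Vert>: swap the finite sum
  over s with the sum over g and use that each \<psi>_g is injective.\<close>
lemma twisted_conv_finite_bound:
  assumes F: "finite F" "F \<subseteq> B"
  shows "(\<Sum>s\<in>F. norm (twisted_conv A B \<psi> a \<xi> s)) \<le> l1norm A a * l1norm B \<xi>"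
proof -
  let ?h = "\<lambda>s g. norm (a g) * norm (\<xi> (\<psi> g s))"
  have swap: "(\<lambda>g. \<Sum>s\<in>F. ?h s g) summable_on A \<and>
      infsum (\<lambda>g. \<Sum>s\<in>F. ?h s g) A = (\<Sum>s\<in>F. infsum (?h s) A)"
    by (rule infsum_finite_sum_swap[OF F(1)]) (use F twisted_conv_abs_summable in auto)
  have "(\<Sum>s\<in>F. norm (twisted_conv A B \<psi> a \<xi> s)) \<le> (\<Sum>s\<in>F. infsum (?h s) A)"
  proof (rule sum_mono)
    fix s assume "s \<in> F"
    then have s: "s \<in> B" using F by auto
    have "(\<lambda>g. norm (a g * \<xi> (\<psi> g s))) summable_on A"
      using twisted_conv_abs_summable[OF s] by (simp add: norm_mult)
    then have "norm (twisted_conv A B \<psi> a \<xi> s) \<le> infsum (\<lambda>g. norm (a g * \<xi> (\<psi> g s))) A"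
      unfolding twisted_conv_def using s by (simp add: norm_infsum_bound)
    then show "norm (twisted_conv A B \<psi> a \<xi> s) \<le> infsum (?h s) A" by (simp add: norm_mult)
  qed
  also have "\<dots> = infsum (\<lambda>g. \<Sum>s\<in>F. ?h s g) A"
    using swap by simp
  also have "\<dots> \<le> infsum (\<lambda>g. norm (a g) * l1norm B \<xi>) A"
  proof (rule infsum_mono)
    show "(\<lambda>g. \<Sum>s\<in>F. ?h s g) summable_on A" using swap by simp
    show "(\<lambda>g. norm (a g) * l1norm B \<xi>) summable_on A"
      by (rule summable_on_cmult_left[OF l1_normsum[OF a]])
    fix g assume g: "g \<in> A"
    have "inj_on (\<psi> g) F" using bij[OF g] F unfolding bij_betw_def by (meson inj_on_subset)
    then have "(\<Sum>s\<in>F. norm (\<xi> (\<psi> g s))) = (\<Sum>s\<in>\<psi> g ` F. norm (\<xi> s))"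
      by (simp add: sum.reindex)
    also have "\<dots> \<le> l1norm B \<xi>"
      unfolding l1norm_def
      by (rule finite_sum_le_infsum) (use l1_normsum[OF xi] F twisted_conv_closed[OF g] in auto)
    finally show "(\<Sum>s\<in>F. ?h s g) \<le> norm (a g) * l1norm B \<xi>"
      by (simp add: sum_distrib_left[symmetric] mult_left_mono)
  qed
  also have "\<dots> = l1norm A a * l1norm B \<xi>"
    unfolding l1norm_def by (rule infsum_cmult_left) (use l1_normsum[OF a] in auto)
  finally show ?thesis .
qed

lemma twisted_conv_abs_summable_total: "(\<lambda>s. norm (twisted_conv A B \<psi> a \<xi> s)) summable_on B"
proof -
  have "bdd_above (sum (\<lambda>s. norm (twisted_conv A B \<psi> a \<xi> s)) ` {F. F \<subseteq> B \<and> finite F})"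
    using twisted_conv_finite_bound by (auto intro!: bdd_aboveI[of _ "l1norm A a * l1norm B \<xi>"])
  then show ?thesis using abs_summable_iff_bdd_above by blast
qed

lemma twisted_conv_l1: "twisted_conv A B \<psi> a \<xi> \<in> l1 B"
  by (rule l1I[OF _ twisted_conv_abs_summable_total]) (simp add: twisted_conv_def)

lemma twisted_conv_norm: "l1norm B (twisted_conv A B \<psi> a \<xi>) \<le> l1norm A a * l1norm B \<xi>"
  using twisted_conv_finite_bound unfolding l1norm_def[of B]
  by (intro infsum_le_finite_sums[OF twisted_conv_abs_summable_total]) auto

end

lemma twisted_conv_add_right:
  assumes "a \<in> l1 A" "\<xi> \<in> l1 B" "\<eta> \<in> l1 B" "\<And>g. g \<in> A \<Longrightarrow> bij_betw (\<psi> g) B B"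
  shows "twisted_conv A B \<psi> a (\<lambda>s. \<xi> s + \<eta> s) = (\<lambda>s. twisted_conv A B \<psi> a \<xi> s + twisted_conv A B \<psi> a \<eta> s)"
  unfolding twisted_conv_def distrib_left
  using infsum_add[OF twisted_conv_summable[OF assms(1,2,4)] twisted_conv_summable[OF assms(1,3,4)]]
  by auto

lemma twisted_conv_scale_right:
  assumes "a \<in> l1 A" "\<xi> \<in> l1 B" "\<And>g. g \<in> A \<Longrightarrow> bij_betw (\<psi> g) B B"
  shows "twisted_conv A B \<psi> a (\<lambda>s. c * \<xi> s) = (\<lambda>s. c * twisted_conv A B \<psi> a \<xi> s)"
  unfolding twisted_conv_def mult.left_commute[of _ c]
  using infsum_cmult_right[OF twisted_conv_summable[OF assms]] by auto

lemma twisted_conv_add_left: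
  assumes "a \<in> l1 A" "b \<in> l1 A" "\<xi> \<in> l1 B" "\<And>g. g \<in> A \<Longrightarrow> bij_betw (\<psi> g) B B"
  shows "twisted_conv A B \<psi> (\<lambda>g. a g + b g) \<xi> = (\<lambda>s. twisted_conv A B \<psi> a \<xi> s + twisted_conv A B \<psi> b \<xi> s)"
  unfolding twisted_conv_def distrib_right
  using infsum_add[OF twisted_conv_summable[OF assms(1,3,4)] twisted_conv_summable[OF assms(2,3,4)]]
  by auto

lemma twisted_conv_scale_left:
  assumes "a \<in> l1 A" "\<xi> \<in> l1 B" "\<And>g. g \<in> A \<Longrightarrow> bij_betw (\<psi> g) B B"
  shows "twisted_conv A B \<psi> (\<lambda>g. c * a g) \<xi> = (\<lambda>s. c * twisted_conv A B \<psi> a \<xi> s)"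
  unfolding twisted_conv_def mult.assoc
  using infsum_cmult_right[OF twisted_conv_summable[OF assms]] by auto


section \<open>The bimodule l1(S) over l1(G)\<close>

context group_action
begin

lemma is_group: "group G"
  using group_hom group_hom.axioms(1) by auto

lemma act_closed: "g \<in> carrier G \<Longrightarrow> s \<in> E \<Longrightarrow> \<phi> g s \<in> E"
  using element_image by simp

lemma act_inv: "g \<in> carrier G \<Longrightarrow> s \<in> E \<Longrightarrow> \<phi> (inv g) (\<phi> g s) = s"
  using orbit_sym_aux by simp

lemma act_inv': "g \<in> carrier G \<Longrightarrow> s \<in> E \<Longrightarrow> \<phi> g (\<phi> (inv g) s) = s"
proof -
  assume g: "g \<in> carrier G" and s: "s \<in> E"
  interpret group G by (rule is_group)
  show ?thesis using act_inv[of "inv g" s] g s by simp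
qed

lemma act_comp: "g \<in> carrier G \<Longrightarrow> h \<in> carrier G \<Longrightarrow> s \<in> E \<Longrightarrow> \<phi> (g \<otimes> h) s = \<phi> g (\<phi> h s)"
  using composition_rule by simp

lemma act_bij: "g \<in> carrier G \<Longrightarrow> bij_betw (\<phi> g) E E"
  using bij_prop0 unfolding Bij_def by simp

lemma right_mult_inv_bij: "x \<in> carrier G \<Longrightarrow> bij_betw (\<lambda>y. y \<otimes> inv x) (carrier G) (carrier G)"
proof -
  assume x: "x \<in> carrier G"
  interpret group G by (rule is_group)
  show ?thesis
    by (rule bij_betw_byWitness[where f'="\<lambda>y. y \<otimes> x"]) (use x in \<open>auto simp: m_assoc\<close>)
qed

lemma left_mult_inv_bij: "y \<in> carrier G \<Longrightarrow> bij_betw (\<lambda>x. inv y \<otimes> x) (carrier G) (carrier G)"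
proof -
  assume y: "y \<in> carrier G"
  interpret group G by (rule is_group)
  show ?thesis
    by (rule bij_betw_byWitness[where f'="\<lambda>x. y \<otimes> x"]) (use y in \<open>auto simp: m_assoc[symmetric]\<close>)
qed

lemma act_inv_bij: "g \<in> carrier G \<Longrightarrow> bij_betw (\<phi> (inv g)) E E"
proof -
  assume "g \<in> carrier G"
  then have "inv g \<in> carrier G" by (simp add: group.inv_closed[OF is_group])
  then show ?thesis by (rule act_bij)
qed

lemma conv_twisted: "conv G a b = twisted_conv (carrier G) (carrier G) (\<lambda>y x. inv y \<otimes> x) a b"
  by (simp add: conv_def twisted_conv_def)

lemma lact_twisted: "lact G E \<phi> a \<xi> = twisted_conv (carrier G) E (\<lambda>g. \<phi> (inv g)) a \<xi>"
  by (simp add: lact_def twisted_conv_def)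

lemma conv_l1: "a \<in> l1 (carrier G) \<Longrightarrow> b \<in> l1 (carrier G) \<Longrightarrow> conv G a b \<in> l1 (carrier G)"
  unfolding conv_twisted by (rule twisted_conv_l1[OF _ _ left_mult_inv_bij])

lemma lact_l1: "a \<in> l1 (carrier G) \<Longrightarrow> \<xi> \<in> l1 E \<Longrightarrow> lact G E \<phi> a \<xi> \<in> l1 E"
  unfolding lact_twisted by (rule twisted_conv_l1[OF _ _ act_inv_bij])

lemma lact_norm:
  "a \<in> l1 (carrier G) \<Longrightarrow> \<xi> \<in> l1 E \<Longrightarrow> l1norm E (lact G E \<phi> a \<xi>) \<le> l1norm (carrier G) a * l1norm E \<xi>"
  unfolding lact_twisted by (rule twisted_conv_norm[OF _ _ act_inv_bij])

lemma conv_delta: "x \<in> carrier G \<Longrightarrow> conv G a (delta x) = (\<lambda>y. if y \<in> carrier G then a (y \<otimes> inv x) else 0)"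
proof
  fix y assume x: "x \<in> carrier G"
  interpret group G by (rule is_group)
  show "conv G a (delta x) y = (if y \<in> carrier G then a (y \<otimes> inv x) else 0)"
  proof (cases "y \<in> carrier G")
    case True
    have "conv G a (delta x) y = infsum (\<lambda>z. a z * delta x (inv z \<otimes> y)) (carrier G)"
      using True by (simp add: conv_def)
    also have "\<dots> = infsum (\<lambda>z. if z = y \<otimes> inv x then a (y \<otimes> inv x) else 0) (carrier G)"
    proof (rule infsum_cong)
      fix z assume z: "z \<in> carrier G"
      have "(inv z \<otimes> y = x) \<longleftrightarrow> (y = z \<otimes> x)" using inv_solve_left' x z True by simp
      moreover have "(z = y \<otimes> inv x) \<longleftrightarrow> (y = z \<otimes> x)" using inv_solve_right x z True by simp
      ultimately show "a z * delta x (inv z \<otimes> y) = (if z = y \<otimes> inv x then a (y \<otimes> inv x) else 0)"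
        by (auto simp: delta_def)
    qed
    also have "\<dots> = a (y \<otimes> inv x)" using True x by (simp add: infsum_single)
    finally show ?thesis using True by simp
  qed (simp add: conv_def)
qed

lemma conv_delta_l1:
  assumes a: "a \<in> l1 (carrier G)" and x: "x \<in> carrier G"
  shows "conv G a (delta x) \<in> l1 (carrier G)" "l1norm (carrier G) (conv G a (delta x)) = l1norm (carrier G) a"
proof -
  have e: "\<And>y. y \<in> carrier G \<Longrightarrow> norm (conv G a (delta x) y) = norm (a (y \<otimes> inv x))"
    using x by (simp add: conv_delta)
  show "conv G a (delta x) \<in> l1 (carrier G)" by (rule conv_l1[OF a l1_delta[OF x]])
  have "l1norm (carrier G) (conv G a (delta x)) = infsum (\<lambda>y. norm (a (y \<otimes> inv x))) (carrier G)"
    unfolding l1norm_def by (rule infsum_cong) (rule e)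
  also have "\<dots> = l1norm (carrier G) a"
    unfolding l1norm_def by (rule infsum_reindex_bij_betw[OF right_mult_inv_bij[OF x], of "\<lambda>z. norm (a z)"])
  finally show "l1norm (carrier G) (conv G a (delta x)) = l1norm (carrier G) a" .
qed

lemma conv_delta_delta: "g \<in> carrier G \<Longrightarrow> x \<in> carrier G \<Longrightarrow> conv G (delta g) (delta x) = delta (g \<otimes> x)"
proof
  fix y assume g: "g \<in> carrier G" and x: "x \<in> carrier G"
  interpret group G by (rule is_group)
  show "conv G (delta g) (delta x) y = delta (g \<otimes> x) y"
  proof (cases "y \<in> carrier G")
    case True
    have "(y \<otimes> inv x = g) \<longleftrightarrow> (y = g \<otimes> x)" using inv_solve_right' True g x by simp
    then show ?thesis unfolding conv_delta[OF x] using True by (simp add: delta_def)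
  next
    case False
    then have "y \<noteq> g \<otimes> x" using g x by auto
    then show ?thesis unfolding conv_delta[OF x] using False by (simp add: delta_def)
  qed
qed

lemma lact_delta_delta: "g \<in> carrier G \<Longrightarrow> u \<in> E \<Longrightarrow> lact G E \<phi> (delta g) (delta u) = delta (\<phi> g u)"
proof
  fix s assume g: "g \<in> carrier G" and u: "u \<in> E"
  interpret group G by (rule is_group)
  show "lact G E \<phi> (delta g) (delta u) s = delta (\<phi> g u) s"
  proof (cases "s \<in> E")
    case True
    have "lact G E \<phi> (delta g) (delta u) s = infsum (\<lambda>h. delta g h * delta u (\<phi> (inv h) s)) (carrier G)"
      using True by (simp add: lact_def)
    also have "\<dots> = infsum (\<lambda>h. if h = g then delta u (\<phi> (inv g) s) else 0) (carrier G)"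
      by (rule infsum_cong) (simp add: delta_def)
    also have "\<dots> = delta u (\<phi> (inv g) s)" using g by (simp add: infsum_single)
    also have "\<dots> = delta (\<phi> g u) s"
    proof -
      have "(\<phi> (inv g) s = u) \<longleftrightarrow> (s = \<phi> g u)"
        using act_inv act_inv' g u True by auto
      then show ?thesis by (simp add: delta_def)
    qed
    finally show ?thesis .
  next
    case False
    then have "s \<noteq> \<phi> g u" using act_closed g u by auto
    then show ?thesis using False by (simp add: lact_def delta_def)
  qed
qed

lemma lact_add_right:
  "a \<in> l1 (carrier G) \<Longrightarrow> \<xi> \<in> l1 E \<Longrightarrow> \<eta> \<in> l1 E \<Longrightarrow>
    lact G E \<phi> a (\<lambda>s. \<xi> s + \<eta> s) = (\<lambda>s. lact G E \<phi> a \<xi> s + lact G E \<phi> a \<eta> s)"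
  unfolding lact_twisted by (rule twisted_conv_add_right[where \<psi>="\<lambda>g. \<phi> (inv g)"]) (auto intro: act_inv_bij)

lemma lact_scale_right:
  "a \<in> l1 (carrier G) \<Longrightarrow> \<xi> \<in> l1 E \<Longrightarrow> lact G E \<phi> a (\<lambda>s. c * \<xi> s) = (\<lambda>s. c * lact G E \<phi> a \<xi> s)"
  unfolding lact_twisted by (rule twisted_conv_scale_right[where \<psi>="\<lambda>g. \<phi> (inv g)"]) (auto intro: act_inv_bij)

lemma lact_add_left:
  "a \<in> l1 (carrier G) \<Longrightarrow> b \<in> l1 (carrier G) \<Longrightarrow> \<xi> \<in> l1 E \<Longrightarrow>
    lact G E \<phi> (\<lambda>g. a g + b g) \<xi> = (\<lambda>s. lact G E \<phi> a \<xi> s + lact G E \<phi> b \<xi> s)"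
  unfolding lact_twisted by (rule twisted_conv_add_left[where \<psi>="\<lambda>g. \<phi> (inv g)"]) (auto intro: act_inv_bij)

lemma lact_scale_left:
  "a \<in> l1 (carrier G) \<Longrightarrow> \<xi> \<in> l1 E \<Longrightarrow> lact G E \<phi> (\<lambda>g. c * a g) \<xi> = (\<lambda>s. c * lact G E \<phi> a \<xi> s)"
  unfolding lact_twisted by (rule twisted_conv_scale_left[where \<psi>="\<lambda>g. \<phi> (inv g)"]) (auto intro: act_inv_bij)

lemma dual_lact_right:
  assumes F: "F \<in> dual E" and a: "a \<in> l1 (carrier G)"
  shows "(\<lambda>\<xi>. F (lact G E \<phi> a \<xi>)) \<in> dual E"
proof -
  obtain C where C: "C \<ge> 0" "\<forall>\<xi>\<in>l1 E. norm (F \<xi>) \<le> C * l1norm E \<xi>" using dual_bound[OF F] by blast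
  show ?thesis
  proof (rule dualI[where C="C * l1norm (carrier G) a"])
    fix \<xi> \<eta> assume x: "\<xi> \<in> l1 E" "\<eta> \<in> l1 E"
    show "F (lact G E \<phi> a (\<lambda>s. \<xi> s + \<eta> s)) = F (lact G E \<phi> a \<xi>) + F (lact G E \<phi> a \<eta>)"
      unfolding lact_add_right[OF a x] by (rule dual_add[OF F lact_l1[OF a x(1)] lact_l1[OF a x(2)]])
  next
    fix c \<xi> assume x: "\<xi> \<in> l1 E"
    show "F (lact G E \<phi> a (\<lambda>s. c * \<xi> s)) = c * F (lact G E \<phi> a \<xi>)"
      unfolding lact_scale_right[OF a x] by (rule dual_scale[OF F lact_l1[OF a x]])
  next
    fix \<xi> assume x: "\<xi> \<in> l1 E"
    have "norm (F (lact G E \<phi> a \<xi>)) \<le> C * l1norm E (lact G E \<phi> a \<xi>)"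
      using C(2) lact_l1[OF a x] by simp
    also have "\<dots> \<le> C * (l1norm (carrier G) a * l1norm E \<xi>)"
      by (rule mult_left_mono[OF lact_norm[OF a x] C(1)])
    finally show "norm (F (lact G E \<phi> a \<xi>)) \<le> C * l1norm (carrier G) a * l1norm E \<xi>"
      by (simp add: mult.assoc)
  qed
qed

lemma dual_lact_left:
  assumes F: "F \<in> dual E" and xi: "\<xi> \<in> l1 E"
  shows "(\<lambda>a. F (lact G E \<phi> a \<xi>)) \<in> dual (carrier G)"
proof -
  obtain C where C: "C \<ge> 0" "\<forall>\<xi>\<in>l1 E. norm (F \<xi>) \<le> C * l1norm E \<xi>" using dual_bound[OF F] by blast
  show ?thesis
  proof (rule dualI[where C="C * l1norm E \<xi>"])
    fix a b assume x: "a \<in> l1 (carrier G)" "b \<in> l1 (carrier G)"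
    show "F (lact G E \<phi> (\<lambda>s. a s + b s) \<xi>) = F (lact G E \<phi> a \<xi>) + F (lact G E \<phi> b \<xi>)"
      unfolding lact_add_left[OF x xi] by (rule dual_add[OF F lact_l1[OF x(1) xi] lact_l1[OF x(2) xi]])
  next
    fix c a assume x: "a \<in> l1 (carrier G)"
    show "F (lact G E \<phi> (\<lambda>s. c * a s) \<xi>) = c * F (lact G E \<phi> a \<xi>)"
      unfolding lact_scale_left[OF x xi] by (rule dual_scale[OF F lact_l1[OF x xi]])
  next
    fix a assume x: "a \<in> l1 (carrier G)"
    have "norm (F (lact G E \<phi> a \<xi>)) \<le> C * l1norm E (lact G E \<phi> a \<xi>)"
      using C(2) lact_l1[OF x xi] by simp
    also have "\<dots> \<le> C * (l1norm (carrier G) a * l1norm E \<xi>)"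
      by (rule mult_left_mono[OF lact_norm[OF x xi] C(1)])
    finally show "norm (F (lact G E \<phi> a \<xi>)) \<le> C * l1norm E \<xi> * l1norm (carrier G) a"
      by (simp add: mult_ac)
  qed
qed

lemma set_merge_at:
  assumes "set as \<subseteq> l1 (carrier G)" "Suc i < length as"
  shows "set (merge_at G i as) \<subseteq> l1 (carrier G)"
proof -
  have "conv G (as ! i) (as ! Suc i) \<in> l1 (carrier G)"
    using assms by (intro conv_l1) (auto dest: nth_mem)
  moreover have "set (take i as) \<subseteq> l1 (carrier G)" "set (drop (Suc (Suc i)) as) \<subseteq> l1 (carrier G)"
    using assms(1) by (meson order_trans set_take_subset set_drop_subset)+
  ultimately show ?thesis by (simp add: merge_at_def)
qed

end


section \<open>Complex means from real means\<close>

text \<open>A mean on K: a positive normalised linear functional on the bounded real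
  functions on K (this is the mean of an amenable group without its invariance).\<close>
definition real_mean :: "'g set \<Rightarrow> (('g \<Rightarrow> real) \<Rightarrow> real) \<Rightarrow> bool" where
  "real_mean K m \<longleftrightarrow> (\<forall>f g. bounded_on K f \<longrightarrow> (\<forall>x\<in>K. f x = g x) \<longrightarrow> m f = m g) \<and>
      (\<forall>f g. bounded_on K f \<longrightarrow> bounded_on K g \<longrightarrow> m (\<lambda>x. f x + g x) = m f + m g) \<and>
      (\<forall>c f. bounded_on K f \<longrightarrow> m (\<lambda>x. c * f x) = c * m f) \<and>
      (\<forall>f. bounded_on K f \<longrightarrow> (\<forall>x\<in>K. f x \<ge> 0) \<longrightarrow> m f \<ge> 0) \<and>
      m (\<lambda>x. 1) = 1"

definition complex_mean :: "(('g \<Rightarrow> real) \<Rightarrow> real) \<Rightarrow> ('g \<Rightarrow> complex) \<Rightarrow> complex" where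
  "complex_mean m f = complex_of_real (m (\<lambda>x. Re (f x))) + \<i> * complex_of_real (m (\<lambda>x. Im (f x)))"

definition cbounded_on :: "'g set \<Rightarrow> ('g \<Rightarrow> complex) \<Rightarrow> bool" where
  "cbounded_on K f \<longleftrightarrow> (\<exists>B. \<forall>x\<in>K. norm (f x) \<le> B)"

lemma bounded_on_Re: "cbounded_on K f \<Longrightarrow> bounded_on K (\<lambda>x. Re (f x))"
  unfolding cbounded_on_def bounded_on_def using abs_Re_le_cmod order_trans by blast

lemma bounded_on_Im: "cbounded_on K f \<Longrightarrow> bounded_on K (\<lambda>x. Im (f x))"
  unfolding cbounded_on_def bounded_on_def using abs_Im_le_cmod order_trans by blast

lemma bounded_on_add: "bounded_on K f \<Longrightarrow> bounded_on K g \<Longrightarrow> bounded_on K (\<lambda>x. f x + g x)"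
proof -
  assume "bounded_on K f" "bounded_on K g"
  then obtain B1 B2 where "\<forall>x\<in>K. \<bar>f x\<bar> \<le> B1" "\<forall>x\<in>K. \<bar>g x\<bar> \<le> B2" unfolding bounded_on_def by blast
  then have "\<forall>x\<in>K. \<bar>f x + g x\<bar> \<le> B1 + B2" by (auto intro: order_trans[OF abs_triangle_ineq] add_mono)
  then show ?thesis unfolding bounded_on_def by blast
qed

lemma bounded_on_scale: "bounded_on K f \<Longrightarrow> bounded_on K (\<lambda>x. c * f x)"
proof -
  assume "bounded_on K f"
  then obtain B where B: "\<forall>x\<in>K. \<bar>f x\<bar> \<le> B" unfolding bounded_on_def by blast
  have "\<forall>x\<in>K. \<bar>c * f x\<bar> \<le> \<bar>c\<bar> * B" using B by (simp add: abs_mult mult_left_mono)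
  then show ?thesis unfolding bounded_on_def by blast
qed

lemma bounded_on_const: "bounded_on K (\<lambda>x. c)"
  unfolding bounded_on_def by blast

lemma cbounded_on_bound: "(\<And>x. x \<in> K \<Longrightarrow> norm (f x) \<le> B) \<Longrightarrow> cbounded_on K f"
  unfolding cbounded_on_def by blast

lemma cbounded_on_add: "cbounded_on K f \<Longrightarrow> cbounded_on K g \<Longrightarrow> cbounded_on K (\<lambda>x. f x + g x)"
proof -
  assume "cbounded_on K f" "cbounded_on K g"
  then obtain B1 B2 where "\<forall>x\<in>K. norm (f x) \<le> B1" "\<forall>x\<in>K. norm (g x) \<le> B2" unfolding cbounded_on_def by blast
  then have "\<forall>x\<in>K. norm (f x + g x) \<le> B1 + B2" by (auto intro: order_trans[OF norm_triangle_ineq] add_mono)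
  then show ?thesis unfolding cbounded_on_def by blast
qed

lemma cbounded_on_scale: "cbounded_on K f \<Longrightarrow> cbounded_on K (\<lambda>x. c * f x)"
proof -
  assume "cbounded_on K f"
  then obtain B where B: "\<forall>x\<in>K. norm (f x) \<le> B" unfolding cbounded_on_def by blast
  have "\<forall>x\<in>K. norm (c * f x) \<le> norm c * B" using B by (simp add: norm_mult mult_left_mono)
  then show ?thesis unfolding cbounded_on_def by blast
qed

lemma cbounded_on_sum: "finite A \<Longrightarrow> (\<And>i. i \<in> A \<Longrightarrow> cbounded_on K (f i)) \<Longrightarrow> cbounded_on K (\<lambda>x. \<Sum>i\<in>A. f i x)"
proof (induction A rule: finite_induct)
  case empty
  have "cbounded_on K (\<lambda>x. 0::complex)" by (rule cbounded_on_bound[of _ _ 0]) simp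
  then show ?case by simp
next
  case (insert a A)
  have "cbounded_on K (\<lambda>x. f a x + (\<Sum>i\<in>A. f i x))" using insert by (intro cbounded_on_add) auto
  then show ?case using insert.hyps by (simp add: sum.insert)
qed

context
  fixes K and m :: "('g \<Rightarrow> real) \<Rightarrow> real"
  assumes mean: "real_mean K m"
begin

lemma mean_cong: "bounded_on K f \<Longrightarrow> (\<And>x. x \<in> K \<Longrightarrow> f x = g x) \<Longrightarrow> m f = m g"
  using mean unfolding real_mean_def by blast

lemma mean_add: "bounded_on K f \<Longrightarrow> bounded_on K g \<Longrightarrow> m (\<lambda>x. f x + g x) = m f + m g"
  using mean unfolding real_mean_def by blast

lemma mean_scale: "bounded_on K f \<Longrightarrow> m (\<lambda>x. c * f x) = c * m f"
  using mean unfolding real_mean_def by blast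

lemma mean_nonneg: "bounded_on K f \<Longrightarrow> (\<And>x. x \<in> K \<Longrightarrow> f x \<ge> 0) \<Longrightarrow> m f \<ge> 0"
  using mean unfolding real_mean_def by blast

lemma mean_one: "m (\<lambda>x. 1) = 1"
  using mean unfolding real_mean_def by blast

lemma mean_const: "m (\<lambda>x. c) = c"
proof -
  have "m (\<lambda>x. c * 1) = c * m (\<lambda>x. 1)" by (rule mean_scale) (rule bounded_on_const)
  then show ?thesis using mean_one by simp
qed

text \<open>|m u| \<le> sup |u|, by positivity of m applied to B + u and B - u.\<close>
lemma mean_abs_bound:
  assumes B: "\<And>x. x \<in> K \<Longrightarrow> \<bar>u x\<bar> \<le> B"
  shows "\<bar>m u\<bar> \<le> B"
proof -
  have bu: "bounded_on K u" unfolding bounded_on_def using B by blast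
  have bmu: "bounded_on K (\<lambda>x. (-1) * u x)" by (rule bounded_on_scale[OF bu])
  have e1: "m (\<lambda>x. (\<lambda>x. B) x + (\<lambda>x. (-1) * u x) x) = m (\<lambda>x. B) + m (\<lambda>x. (-1) * u x)"
    by (rule mean_add[OF bounded_on_const bmu])
  have e2: "m (\<lambda>x. (-1) * u x) = (-1) * m u" by (rule mean_scale[OF bu])
  have p1: "m (\<lambda>x. B + (-1) * u x) \<ge> 0"
    by (rule mean_nonneg[OF bounded_on_add[OF bounded_on_const bmu]]) (use B in force)
  have e3: "m (\<lambda>x. (\<lambda>x. B) x + u x) = m (\<lambda>x. B) + m u"
    by (rule mean_add[OF bounded_on_const bu])
  have p2: "m (\<lambda>x. B + u x) \<ge> 0"
    by (rule mean_nonneg[OF bounded_on_add[OF bounded_on_const bu]]) (use B in force)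
  show ?thesis using e1 e2 e3 p1 p2 mean_const[of B] by simp
qed

lemma complex_mean_cong: "cbounded_on K f \<Longrightarrow> (\<And>x. x \<in> K \<Longrightarrow> f x = g x) \<Longrightarrow> complex_mean m f = complex_mean m g"
proof -
  assume f: "cbounded_on K f" and e: "\<And>x. x \<in> K \<Longrightarrow> f x = g x"
  have "m (\<lambda>x. Re (f x)) = m (\<lambda>x. Re (g x))" by (rule mean_cong[OF bounded_on_Re[OF f]]) (simp add: e)
  moreover have "m (\<lambda>x. Im (f x)) = m (\<lambda>x. Im (g x))" by (rule mean_cong[OF bounded_on_Im[OF f]]) (simp add: e)
  ultimately show ?thesis unfolding complex_mean_def by simp
qed

lemma complex_mean_add: "cbounded_on K f \<Longrightarrow> cbounded_on K g \<Longrightarrow> complex_mean m (\<lambda>x. f x + g x) = complex_mean m f + complex_mean m g"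
proof -
  assume f: "cbounded_on K f" and g: "cbounded_on K g"
  have "m (\<lambda>x. Re (f x + g x)) = m (\<lambda>x. Re (f x)) + m (\<lambda>x. Re (g x))"
    using mean_add[OF bounded_on_Re[OF f] bounded_on_Re[OF g]] by simp
  moreover have "m (\<lambda>x. Im (f x + g x)) = m (\<lambda>x. Im (f x)) + m (\<lambda>x. Im (g x))"
    using mean_add[OF bounded_on_Im[OF f] bounded_on_Im[OF g]] by simp
  ultimately show ?thesis unfolding complex_mean_def by (simp add: algebra_simps)
qed

lemma complex_mean_scale: "cbounded_on K f \<Longrightarrow> complex_mean m (\<lambda>x. c * f x) = c * complex_mean m f"
proof -
  assume f: "cbounded_on K f"
  have bR: "bounded_on K (\<lambda>x. Re (f x))" by (rule bounded_on_Re[OF f])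
  have bI: "bounded_on K (\<lambda>x. Im (f x))" by (rule bounded_on_Im[OF f])
  have "m (\<lambda>x. Re (c * f x)) = m (\<lambda>x. (\<lambda>x. Re c * Re (f x)) x + (\<lambda>x. (- Im c) * Im (f x)) x)"
    by simp
  also have "\<dots> = m (\<lambda>x. Re c * Re (f x)) + m (\<lambda>x. (- Im c) * Im (f x))"
    by (rule mean_add[OF bounded_on_scale[OF bR] bounded_on_scale[OF bI]])
  also have "\<dots> = Re c * m (\<lambda>x. Re (f x)) + (- Im c) * m (\<lambda>x. Im (f x))"
    by (simp only: mean_scale[OF bR] mean_scale[OF bI])
  finally have r: "m (\<lambda>x. Re (c * f x)) = Re c * m (\<lambda>x. Re (f x)) - Im c * m (\<lambda>x. Im (f x))" by simp
  have "m (\<lambda>x. Im (c * f x)) = m (\<lambda>x. (\<lambda>x. Re c * Im (f x)) x + (\<lambda>x. Im c * Re (f x)) x)"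
    by simp
  also have "\<dots> = m (\<lambda>x. Re c * Im (f x)) + m (\<lambda>x. Im c * Re (f x))"
    by (rule mean_add[OF bounded_on_scale[OF bI] bounded_on_scale[OF bR]])
  also have "\<dots> = Re c * m (\<lambda>x. Im (f x)) + Im c * m (\<lambda>x. Re (f x))"
    by (simp only: mean_scale[OF bR] mean_scale[OF bI])
  finally have i: "m (\<lambda>x. Im (c * f x)) = Re c * m (\<lambda>x. Im (f x)) + Im c * m (\<lambda>x. Re (f x))" .
  show ?thesis unfolding complex_mean_def r i by (simp add: complex_eq_iff algebra_simps)
qed

lemma complex_mean_const: "complex_mean m (\<lambda>x. c) = c"
  unfolding complex_mean_def mean_const by (simp add: complex_eq_iff)

text \<open>A complex mean has norm at most 2 (bounding real and imaginary parts separately).\<close>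
lemma complex_mean_bound:
  assumes B: "\<And>x. x \<in> K \<Longrightarrow> norm (f x) \<le> B"
  shows "norm (complex_mean m f) \<le> 2 * B"
proof -
  have r: "\<bar>m (\<lambda>x. Re (f x))\<bar> \<le> B"
    by (rule mean_abs_bound) (use B abs_Re_le_cmod order_trans in blast)
  have i: "\<bar>m (\<lambda>x. Im (f x))\<bar> \<le> B"
    by (rule mean_abs_bound) (use B abs_Im_le_cmod order_trans in blast)
  have "norm (complex_mean m f) \<le> \<bar>Re (complex_mean m f)\<bar> + \<bar>Im (complex_mean m f)\<bar>" by (rule cmod_le)
  also have "\<dots> = \<bar>m (\<lambda>x. Re (f x))\<bar> + \<bar>m (\<lambda>x. Im (f x))\<bar>" by (simp add: complex_mean_def)
  finally show ?thesis using r i by simp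
qed

lemma complex_mean_invariant:
  assumes inv: "\<forall>f. bounded_on K f \<longrightarrow> m (\<lambda>x. f (mul x)) = m f" and f: "cbounded_on K f"
  shows "complex_mean m (\<lambda>x. f (mul x)) = complex_mean m f"
proof -
  have "m (\<lambda>x. (\<lambda>x. Re (f x)) (mul x)) = m (\<lambda>x. Re (f x))" using inv bounded_on_Re[OF f] by blast
  moreover have "m (\<lambda>x. (\<lambda>x. Im (f x)) (mul x)) = m (\<lambda>x. Im (f x))" using inv bounded_on_Im[OF f] by blast
  ultimately show ?thesis unfolding complex_mean_def by simp
qed

end


section \<open>Orbit means for an action with amenable stabilisers\<close>

locale amenable_stabilizers = group_action G E \<phi> for G (structure) and E and \<phi> +
  assumes amen: "\<forall>s\<in>E. amenable_group (G\<lparr>carrier := stabilizer G \<phi> s\<rparr>)"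
begin

definition invariant_mean :: "'c \<Rightarrow> (('a \<Rightarrow> real) \<Rightarrow> real) \<Rightarrow> bool" where
  "invariant_mean u m \<longleftrightarrow> real_mean (stabilizer G \<phi> u) m \<and>
     (\<forall>h\<in>stabilizer G \<phi> u. \<forall>f. bounded_on (stabilizer G \<phi> u) f \<longrightarrow> m (\<lambda>x. f (h \<otimes> x)) = m f)"

definition stab_mean :: "'c \<Rightarrow> ('a \<Rightarrow> real) \<Rightarrow> real" where
  "stab_mean u = (SOME m. invariant_mean u m)"

definition orbit_rep :: "'c \<Rightarrow> 'c" where
  "orbit_rep t = (SOME u. u \<in> orbit G \<phi> t)"

definition transporter :: "'c \<Rightarrow> 'a" where
  "transporter t = (SOME g. g \<in> carrier G \<and> \<phi> g (orbit_rep t) = t)"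

definition orbit_mean :: "'c \<Rightarrow> ('a \<Rightarrow> complex) \<Rightarrow> complex" where
  "orbit_mean t \<Phi> = complex_mean (stab_mean (orbit_rep t)) (\<lambda>h. \<Phi> (transporter t \<otimes> h))"

lemma stab_mean_invariant: "u \<in> E \<Longrightarrow> invariant_mean u (stab_mean u)"
proof -
  assume u: "u \<in> E"
  have "amenable_group (G\<lparr>carrier := stabilizer G \<phi> u\<rparr>)" using amen u by blast
  then have "\<exists>m. invariant_mean u m" unfolding amenable_group_def invariant_mean_def real_mean_def by simp
  then show ?thesis unfolding stab_mean_def by (rule someI_ex)
qed

lemma orbit_memE: "t \<in> E \<Longrightarrow> u \<in> orbit G \<phi> t \<Longrightarrow> \<exists>g\<in>carrier G. u = \<phi> g t"
  unfolding orbit_def by blast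

lemma orbit_rep_mem: "t \<in> E \<Longrightarrow> orbit_rep t \<in> orbit G \<phi> t \<and> orbit_rep t \<in> E"
proof -
  assume t: "t \<in> E"
  have "orbit_rep t \<in> orbit G \<phi> t" unfolding orbit_rep_def by (rule someI[of _ t]) (rule orbit_refl[OF t])
  moreover obtain g where "g \<in> carrier G" "orbit_rep t = \<phi> g t" using orbit_memE[OF t calculation] by blast
  moreover then have "orbit_rep t \<in> E" using act_closed t by simp
  ultimately show ?thesis by simp
qed

lemma orbit_eq: "t \<in> E \<Longrightarrow> g \<in> carrier G \<Longrightarrow> orbit G \<phi> (\<phi> g t) = orbit G \<phi> t"
proof -
  assume t: "t \<in> E" and g: "g \<in> carrier G"
  have gt: "\<phi> g t \<in> E" "\<phi> g t \<in> orbit G \<phi> t" using act_closed g t unfolding orbit_def by auto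
  have sub: "orbit G \<phi> y \<subseteq> E" if "y \<in> E" for y unfolding orbit_def using act_closed that by auto
  show ?thesis
  proof (intro equalityI subsetI)
    fix v assume "v \<in> orbit G \<phi> (\<phi> g t)"
    then show "v \<in> orbit G \<phi> t" using orbit_trans[OF t gt(1) _ gt(2)] sub[OF gt(1)] by blast
  next
    fix v assume "v \<in> orbit G \<phi> t"
    then show "v \<in> orbit G \<phi> (\<phi> g t)" using orbit_trans[OF gt(1) t _ orbit_sym[OF t gt]] sub[OF t] by blast
  qed
qed

lemma orbit_rep_act: "t \<in> E \<Longrightarrow> g \<in> carrier G \<Longrightarrow> orbit_rep (\<phi> g t) = orbit_rep t"
  unfolding orbit_rep_def using orbit_eq by simp

lemma transporter_mem: "t \<in> E \<Longrightarrow> transporter t \<in> carrier G \<and> \<phi> (transporter t) (orbit_rep t) = t"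
proof -
  assume t: "t \<in> E"
  interpret group G by (rule is_group)
  obtain g where g: "g \<in> carrier G" "orbit_rep t = \<phi> g t" using orbit_memE[OF t] orbit_rep_mem[OF t] by blast
  have "inv g \<in> carrier G \<and> \<phi> (inv g) (orbit_rep t) = t" using g act_inv t by simp
  then show ?thesis unfolding transporter_def by (rule someI)
qed

lemma orbit_mean_arg_bounded: "t \<in> E \<Longrightarrow> cbounded_on (carrier G) \<Phi> \<Longrightarrow> cbounded_on (stabilizer G \<phi> (orbit_rep t)) (\<lambda>h. \<Phi> (transporter t \<otimes> h))"
proof -
  assume t: "t \<in> E" and P: "cbounded_on (carrier G) \<Phi>"
  interpret group G by (rule is_group)
  obtain B where B: "\<forall>x\<in>carrier G. norm (\<Phi> x) \<le> B" using P unfolding cbounded_on_def by blast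
  have "\<forall>h\<in>stabilizer G \<phi> (orbit_rep t). norm (\<Phi> (transporter t \<otimes> h)) \<le> B"
    using B transporter_mem[OF t] stabilizer_subset by blast
  then show ?thesis unfolding cbounded_on_def by blast
qed

lemma stab_real_mean: "t \<in> E \<Longrightarrow> real_mean (stabilizer G \<phi> (orbit_rep t)) (stab_mean (orbit_rep t))"
  using stab_mean_invariant orbit_rep_mem unfolding invariant_mean_def by blast

lemma orbit_mean_cong: "t \<in> E \<Longrightarrow> cbounded_on (carrier G) \<Phi> \<Longrightarrow> (\<And>x. x \<in> carrier G \<Longrightarrow> \<Phi> x = \<Psi> x) \<Longrightarrow> orbit_mean t \<Phi> = orbit_mean t \<Psi>"
proof -
  assume t: "t \<in> E" and P: "cbounded_on (carrier G) \<Phi>" and e: "\<And>x. x \<in> carrier G \<Longrightarrow> \<Phi> x = \<Psi> x"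
  interpret group G by (rule is_group)
  show ?thesis unfolding orbit_mean_def
    by (rule complex_mean_cong[OF stab_real_mean[OF t] orbit_mean_arg_bounded[OF t P]]) (use e transporter_mem[OF t] stabilizer_subset in blast)
qed

lemma orbit_mean_add: "t \<in> E \<Longrightarrow> cbounded_on (carrier G) \<Phi> \<Longrightarrow> cbounded_on (carrier G) \<Psi> \<Longrightarrow> orbit_mean t (\<lambda>x. \<Phi> x + \<Psi> x) = orbit_mean t \<Phi> + orbit_mean t \<Psi>"
  unfolding orbit_mean_def by (rule complex_mean_add[OF stab_real_mean orbit_mean_arg_bounded orbit_mean_arg_bounded])

lemma orbit_mean_scale: "t \<in> E \<Longrightarrow> cbounded_on (carrier G) \<Phi> \<Longrightarrow> orbit_mean t (\<lambda>x. c * \<Phi> x) = c * orbit_mean t \<Phi>"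
  unfolding orbit_mean_def by (rule complex_mean_scale[OF stab_real_mean orbit_mean_arg_bounded])

lemma orbit_mean_const: "t \<in> E \<Longrightarrow> orbit_mean t (\<lambda>x. c) = c"
  unfolding orbit_mean_def by (rule complex_mean_const[OF stab_real_mean])

lemma orbit_mean_bound: "t \<in> E \<Longrightarrow> (\<And>x. x \<in> carrier G \<Longrightarrow> norm (\<Phi> x) \<le> B) \<Longrightarrow> norm (orbit_mean t \<Phi>) \<le> 2 * B"
proof -
  assume t: "t \<in> E" and B: "\<And>x. x \<in> carrier G \<Longrightarrow> norm (\<Phi> x) \<le> B"
  interpret group G by (rule is_group)
  show ?thesis unfolding orbit_mean_def
    by (rule complex_mean_bound[OF stab_real_mean[OF t]]) (use B transporter_mem[OF t] stabilizer_subset in blast)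
qed

lemma orbit_mean_sum: assumes t: "t \<in> E" shows "finite A \<Longrightarrow> (\<And>i. i \<in> A \<Longrightarrow> cbounded_on (carrier G) (\<Phi> i)) \<Longrightarrow>
   orbit_mean t (\<lambda>x. \<Sum>i\<in>A. \<Phi> i x) = (\<Sum>i\<in>A. orbit_mean t (\<Phi> i))"
proof (induction A rule: finite_induct)
  case empty
  then show ?case using orbit_mean_const[OF t, of 0] by simp
next
  case (insert a A)
  have "orbit_mean t (\<lambda>x. \<Sum>i\<in>insert a A. \<Phi> i x) = orbit_mean t (\<lambda>x. \<Phi> a x + (\<Sum>i\<in>A. \<Phi> i x))"
    using insert.hyps by (simp add: sum.insert)
  also have "\<dots> = orbit_mean t (\<Phi> a) + orbit_mean t (\<lambda>x. \<Sum>i\<in>A. \<Phi> i x)"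
    by (rule orbit_mean_add[OF t]) (use insert in \<open>auto intro: cbounded_on_sum\<close>)
  finally show ?case using insert by (simp add: sum.insert)
qed

lemma transporter_stabilizer:
  assumes g: "g \<in> carrier G" and t: "t \<in> E"
  shows "inv (transporter (\<phi> g t)) \<otimes> (g \<otimes> transporter t) \<in> stabilizer G \<phi> (orbit_rep t)"
proof -
  interpret group G by (rule is_group)
  let ?u = "orbit_rep t" and ?g1 = "transporter (\<phi> g t)" and ?g0 = "transporter t"
  have gt: "\<phi> g t \<in> E" using act_closed g t by simp
  have u: "?u \<in> E" using orbit_rep_mem[OF t] by simp
  have g1: "?g1 \<in> carrier G" "\<phi> ?g1 ?u = \<phi> g t"
    using transporter_mem[OF gt] orbit_rep_act[OF t g] by auto
  have g0: "?g0 \<in> carrier G" "\<phi> ?g0 ?u = t" using transporter_mem[OF t] by auto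
  have "\<phi> (inv ?g1 \<otimes> (g \<otimes> ?g0)) ?u = \<phi> (inv ?g1) (\<phi> g (\<phi> ?g0 ?u))"
    using act_comp g1 g0 g u act_closed by simp
  also have "\<dots> = ?u" using g0 g1 act_inv[OF g1(1) u] by simp
  finally show ?thesis using g1 g0 g unfolding stabilizer_def by simp
qed

text \<open>Equivariance of orbit means, M_{g.t}(\<Phi>) = M_t(x \<mapsto> \<Phi>(g x)): with
  k = g_{g.t}^-1 g g_t in the stabiliser of u, the two means differ by the
  translation h \<mapsto> k h, under which the chosen mean on the stabiliser is invariant.\<close>
lemma orbit_mean_equivariant:
  assumes g: "g \<in> carrier G" and t: "t \<in> E" and P: "cbounded_on (carrier G) \<Phi>"
  shows "orbit_mean (\<phi> g t) \<Phi> = orbit_mean t (\<lambda>x. \<Phi> (g \<otimes> x))"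
proof -
  interpret group G by (rule is_group)
  let ?u = "orbit_rep t" and ?g1 = "transporter (\<phi> g t)" and ?g0 = "transporter t"
  define k where "k = inv ?g1 \<otimes> (g \<otimes> ?g0)"
  have gt: "\<phi> g t \<in> E" using act_closed g t by simp
  have ru: "orbit_rep (\<phi> g t) = ?u" using orbit_rep_act t g by simp
  have g1: "?g1 \<in> carrier G" using transporter_mem[OF gt] by simp
  have g0: "?g0 \<in> carrier G" using transporter_mem[OF t] by simp
  have k: "k \<in> stabilizer G \<phi> ?u" unfolding k_def by (rule transporter_stabilizer[OF g t])
  then have kG: "k \<in> carrier G" using stabilizer_subset by blast
  have Pb: "cbounded_on (stabilizer G \<phi> ?u) (\<lambda>h. \<Phi> (?g1 \<otimes> h))"
    using orbit_mean_arg_bounded[OF gt P] ru by simp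
  have shift: "?g1 \<otimes> (k \<otimes> h) = g \<otimes> (?g0 \<otimes> h)" if "h \<in> carrier G" for h
    using g1 g0 g that by (simp add: k_def m_assoc[symmetric])
  have "orbit_mean t (\<lambda>x. \<Phi> (g \<otimes> x)) = complex_mean (stab_mean ?u) (\<lambda>h. \<Phi> (?g1 \<otimes> (k \<otimes> h)))"
    unfolding orbit_mean_def
  proof (rule complex_mean_cong[OF stab_real_mean[OF t]])
    show "cbounded_on (stabilizer G \<phi> ?u) (\<lambda>h. \<Phi> (g \<otimes> (?g0 \<otimes> h)))"
      using P g g0 stabilizer_subset unfolding cbounded_on_def by blast
    fix h assume "h \<in> stabilizer G \<phi> ?u"
    then show "\<Phi> (g \<otimes> (?g0 \<otimes> h)) = \<Phi> (?g1 \<otimes> (k \<otimes> h))"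
      using shift stabilizer_subset by (metis subsetD)
  qed
  also have "\<dots> = complex_mean (stab_mean ?u) (\<lambda>h. \<Phi> (?g1 \<otimes> h))"
    using stab_mean_invariant[OF orbit_rep_mem[OF t, THEN conjunct2]] k
    unfolding invariant_mean_def
    by (intro complex_mean_invariant[OF stab_real_mean[OF t] _ Pb]) blast
  also have "\<dots> = orbit_mean (\<phi> g t) \<Phi>" by (simp add: orbit_mean_def ru)
  finally show ?thesis by simp
qed

end

lemma (in amenable_stabilizers) orbit_mean_dual:
  assumes u: "u \<in> E" and P: "\<And>x. x \<in> carrier G \<Longrightarrow> P x \<in> dual (carrier G)"
    and bound: "\<And>x a. x \<in> carrier G \<Longrightarrow> a \<in> l1 (carrier G) \<Longrightarrow> norm (P x a) \<le> C * l1norm (carrier G) a"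
  shows "(\<lambda>a. orbit_mean u (\<lambda>x. P x a)) \<in> dual (carrier G)"
proof (rule dualI[where C="2 * C"])
  have bdd: "cbounded_on (carrier G) (\<lambda>x. P x a)" if "a \<in> l1 (carrier G)" for a
    using bound that by (intro cbounded_on_bound[where B="C * l1norm (carrier G) a"])
  fix a b assume a: "a \<in> l1 (carrier G)" and b: "b \<in> l1 (carrier G)"
  have "orbit_mean u (\<lambda>x. P x (\<lambda>s. a s + b s)) = orbit_mean u (\<lambda>x. P x a + P x b)"
    by (rule orbit_mean_cong[OF u bdd[OF l1_add[OF a b]]]) (simp add: dual_add[OF P a b])
  also have "\<dots> = orbit_mean u (\<lambda>x. P x a) + orbit_mean u (\<lambda>x. P x b)"
    by (rule orbit_mean_add[OF u bdd[OF a] bdd[OF b]])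
  finally show "orbit_mean u (\<lambda>x. P x (\<lambda>s. a s + b s)) = orbit_mean u (\<lambda>x. P x a) + orbit_mean u (\<lambda>x. P x b)" .
next
  have bdd: "cbounded_on (carrier G) (\<lambda>x. P x a)" if "a \<in> l1 (carrier G)" for a
    using bound that by (intro cbounded_on_bound[where B="C * l1norm (carrier G) a"])
  fix c a assume a: "a \<in> l1 (carrier G)"
  have "orbit_mean u (\<lambda>x. P x (\<lambda>s. c * a s)) = orbit_mean u (\<lambda>x. c * P x a)"
    by (rule orbit_mean_cong[OF u bdd[OF l1_scale[OF a]]]) (simp add: dual_scale[OF P a])
  also have "\<dots> = c * orbit_mean u (\<lambda>x. P x a)"
    by (rule orbit_mean_scale[OF u bdd[OF a]])
  finally show "orbit_mean u (\<lambda>x. P x (\<lambda>s. c * a s)) = c * orbit_mean u (\<lambda>x. P x a)" .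
next
  fix a assume "a \<in> l1 (carrier G)"
  then have "norm (orbit_mean u (\<lambda>x. P x a)) \<le> 2 * (C * l1norm (carrier G) a)"
    using bound by (intro orbit_mean_bound[OF u])
  then show "norm (orbit_mean u (\<lambda>x. P x a)) \<le> 2 * C * l1norm (carrier G) a" by simp
qed

section \<open>The primitive of a bounded cocycle\<close>

lemma set_list_update_subset: "set bs \<subseteq> A \<Longrightarrow> v \<in> A \<Longrightarrow> set (bs[i := v]) \<subseteq> A"
  by (meson insert_subset order_trans set_update_subset_insert)

locale bounded_cocycle = amenable_stabilizers G E \<phi> for G (structure) and E and \<phi> +
  fixes n :: nat and T
  assumes n_pos: "n \<ge> 1" and T_cochain: "cochain G E n T"
    and T_cocycle: "\<forall>as. length as = Suc n \<longrightarrow> set as \<subseteq> l1 (carrier G) \<longrightarrow>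
                      (\<forall>\<xi>\<in>l1 E. cobound G E \<phi> n T as \<xi> = 0)"
begin

abbreviation prod_norm :: "('a \<Rightarrow> complex) list \<Rightarrow> real" where
  "prod_norm as \<equiv> (\<Prod>a\<leftarrow>as. l1norm (carrier G) a)"

lemma T_dual: "length as = n \<Longrightarrow> set as \<subseteq> l1 (carrier G) \<Longrightarrow> T as \<in> dual E"
  using T_cochain[unfolded cochain_def, THEN conjunct1] by blast

lemma T_add:
  "length as = n \<Longrightarrow> set as \<subseteq> l1 (carrier G) \<Longrightarrow> i < n \<Longrightarrow> x \<in> l1 (carrier G) \<Longrightarrow> y \<in> l1 (carrier G) \<Longrightarrow>
    \<xi> \<in> l1 E \<Longrightarrow> T (as[i := (\<lambda>g. x g + y g)]) \<xi> = T (as[i := x]) \<xi> + T (as[i := y]) \<xi>"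
  using T_cochain[unfolded cochain_def, THEN conjunct2, THEN conjunct1] by blast

lemma T_scale:
  "length as = n \<Longrightarrow> set as \<subseteq> l1 (carrier G) \<Longrightarrow> i < n \<Longrightarrow> x \<in> l1 (carrier G) \<Longrightarrow>
    \<xi> \<in> l1 E \<Longrightarrow> T (as[i := (\<lambda>g. c * x g)]) \<xi> = c * T (as[i := x]) \<xi>"
  using T_cochain[unfolded cochain_def, THEN conjunct2, THEN conjunct2, THEN conjunct1] by blast

definition T_bound :: real where
  "T_bound = (SOME C. C \<ge> 0 \<and> (\<forall>as. length as = n \<longrightarrow> set as \<subseteq> l1 (carrier G) \<longrightarrow>
        (\<forall>\<xi>\<in>l1 E. norm (T as \<xi>) \<le> C * prod_norm as * l1norm E \<xi>)))"

lemma T_bound: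
  shows T_bound_nonneg: "T_bound \<ge> 0"
    and T_norm: "length as = n \<Longrightarrow> set as \<subseteq> l1 (carrier G) \<Longrightarrow> \<xi> \<in> l1 E \<Longrightarrow>
      norm (T as \<xi>) \<le> T_bound * prod_norm as * l1norm E \<xi>"
proof -
  obtain C where C: "\<forall>as. length as = n \<longrightarrow> set as \<subseteq> l1 (carrier G) \<longrightarrow>
        (\<forall>\<xi>\<in>l1 E. norm (T as \<xi>) \<le> C * prod_norm as * l1norm E \<xi>)"
    using T_cochain[unfolded cochain_def, THEN conjunct2, THEN conjunct2, THEN conjunct2] by (elim exE)
  have "\<forall>as. length as = n \<longrightarrow> set as \<subseteq> l1 (carrier G) \<longrightarrow>
        (\<forall>\<xi>\<in>l1 E. norm (T as \<xi>) \<le> max C 0 * prod_norm as * l1norm E \<xi>)"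
  proof (intro allI impI ballI)
    fix as \<xi> assume a: "length as = n" "set as \<subseteq> l1 (carrier G)" "\<xi> \<in> l1 E"
    have "C * prod_norm as * l1norm E \<xi> \<le> max C 0 * prod_norm as * l1norm E \<xi>"
      by (intro mult_right_mono) (simp_all add: l1norm_prod_nonneg l1norm_nonneg)
    with C a show "norm (T as \<xi>) \<le> max C 0 * prod_norm as * l1norm E \<xi>" by fastforce
  qed
  then have "\<exists>C\<ge>0. \<forall>as. length as = n \<longrightarrow> set as \<subseteq> l1 (carrier G) \<longrightarrow>
        (\<forall>\<xi>\<in>l1 E. norm (T as \<xi>) \<le> C * prod_norm as * l1norm E \<xi>)"
    by (intro exI[of _ "max C 0"]) simp
  from someI_ex[OF this, folded T_bound_def]
  show "T_bound \<ge> 0"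
    and "length as = n \<Longrightarrow> set as \<subseteq> l1 (carrier G) \<Longrightarrow> \<xi> \<in> l1 E \<Longrightarrow>
      norm (T as \<xi>) \<le> T_bound * prod_norm as * l1norm E \<xi>" by blast+
qed

definition probe :: "('a \<Rightarrow> complex) list \<Rightarrow> 'c \<Rightarrow> 'a \<Rightarrow> complex" where
  "probe bs t x = T (bs @ [delta x]) (delta (\<phi> (inv x) t))"

definition avg :: "('a \<Rightarrow> complex) list \<Rightarrow> 'c \<Rightarrow> complex" where
  "avg bs t = orbit_mean t (probe bs t)"

definition R :: "('a \<Rightarrow> complex) list \<Rightarrow> ('c \<Rightarrow> complex) \<Rightarrow> complex" where
  "R bs \<xi> = (-1) ^ n * pairing E (avg bs) \<xi>"

lemma probe_bound:
  assumes bs: "length bs = n - 1" "set bs \<subseteq> l1 (carrier G)" and t: "t \<in> E" and x: "x \<in> carrier G"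
  shows "norm (probe bs t x) \<le> T_bound * prod_norm bs"
proof -
  have v: "\<phi> (inv x) t \<in> E" using act_closed x t group.inv_closed[OF is_group] by simp
  have "norm (probe bs t x) \<le> T_bound * prod_norm (bs @ [delta x]) * l1norm E (delta (\<phi> (inv x) t))"
    unfolding probe_def by (rule T_norm) (use bs n_pos l1_delta[OF x] l1_delta[OF v] in auto)
  also have "\<dots> = T_bound * prod_norm bs" using l1norm_delta[OF x] l1norm_delta[OF v] by simp
  finally show ?thesis .
qed

lemma probe_bounded:
  "length bs = n - 1 \<Longrightarrow> set bs \<subseteq> l1 (carrier G) \<Longrightarrow> t \<in> E \<Longrightarrow> cbounded_on (carrier G) (probe bs t)"
  by (rule cbounded_on_bound) (rule probe_bound)

lemma avg_bound:
  "length bs = n - 1 \<Longrightarrow> set bs \<subseteq> l1 (carrier G) \<Longrightarrow> t \<in> E \<Longrightarrow> norm (avg bs t) \<le> 2 * (T_bound * prod_norm bs)"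
  unfolding avg_def by (rule orbit_mean_bound) (auto intro: probe_bound)

lemma R_dual: "length bs = n - 1 \<Longrightarrow> set bs \<subseteq> l1 (carrier G) \<Longrightarrow> R bs \<in> dual E"
  unfolding R_def[abs_def] by (intro dual_cmult pairing_dual[where B="2 * (T_bound * prod_norm bs)"] avg_bound)

lemma R_delta: "length bs = n - 1 \<Longrightarrow> set bs \<subseteq> l1 (carrier G) \<Longrightarrow> u \<in> E \<Longrightarrow> R bs (delta u) = (-1) ^ n * avg bs u"
  unfolding R_def by (subst pairing_delta[OF avg_bound]) auto

lemma R_norm:
  "length bs = n - 1 \<Longrightarrow> set bs \<subseteq> l1 (carrier G) \<Longrightarrow> \<xi> \<in> l1 E \<Longrightarrow>
    norm (R bs \<xi>) \<le> 2 * T_bound * prod_norm bs * l1norm E \<xi>"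
  unfolding R_def using pairing_bound[OF avg_bound] by (simp add: norm_mult norm_power mult.assoc)

lemma avg_add_slot:
  assumes as: "length as = n - 1" "set as \<subseteq> l1 (carrier G)" and i: "i < n - 1"
    and x: "x \<in> l1 (carrier G)" and y: "y \<in> l1 (carrier G)" and t: "t \<in> E"
  shows "avg (as[i := (\<lambda>g. x g + y g)]) t = avg (as[i := x]) t + avg (as[i := y]) t"
proof -
  have "avg (as[i := (\<lambda>g. x g + y g)]) t = orbit_mean t (\<lambda>z. probe (as[i := x]) t z + probe (as[i := y]) t z)"
    unfolding avg_def
  proof (rule orbit_mean_cong[OF t])
    show "cbounded_on (carrier G) (probe (as[i := (\<lambda>g. x g + y g)]) t)"
      by (rule probe_bounded[OF _ _ t]) (use as set_list_update_subset[OF as(2) l1_add[OF x y]] in auto)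
    fix z assume z: "z \<in> carrier G"
    have "delta (\<phi> (inv z) t) \<in> l1 E"
      using act_closed t z group.inv_closed[OF is_group] by (simp add: l1_delta)
    then show "probe (as[i := (\<lambda>g. x g + y g)]) t z = probe (as[i := x]) t z + probe (as[i := y]) t z"
      unfolding probe_def using T_add[of "as @ [delta z]" i x y] as n_pos i x y l1_delta[OF z]
      by (simp add: list_update_append)
  qed
  also have "\<dots> = avg (as[i := x]) t + avg (as[i := y]) t"
    unfolding avg_def
    by (rule orbit_mean_add[OF t probe_bounded probe_bounded])
       (use as set_list_update_subset[OF as(2)] x y t in auto)
  finally show ?thesis .
qed

lemma avg_scale_slot:
  assumes as: "length as = n - 1" "set as \<subseteq> l1 (carrier G)" and i: "i < n - 1"
    and x: "x \<in> l1 (carrier G)" and t: "t \<in> E"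
  shows "avg (as[i := (\<lambda>g. c * x g)]) t = c * avg (as[i := x]) t"
proof -
  have "avg (as[i := (\<lambda>g. c * x g)]) t = orbit_mean t (\<lambda>z. c * probe (as[i := x]) t z)"
    unfolding avg_def
  proof (rule orbit_mean_cong[OF t])
    show "cbounded_on (carrier G) (probe (as[i := (\<lambda>g. c * x g)]) t)"
      by (rule probe_bounded[OF _ _ t]) (use as set_list_update_subset[OF as(2) l1_scale[OF x]] in auto)
    fix z assume z: "z \<in> carrier G"
    have "delta (\<phi> (inv z) t) \<in> l1 E"
      using act_closed t z group.inv_closed[OF is_group] by (simp add: l1_delta)
    then show "probe (as[i := (\<lambda>g. c * x g)]) t z = c * probe (as[i := x]) t z"
      unfolding probe_def using T_scale[of "as @ [delta z]" i x] as n_pos i x l1_delta[OF z]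
      by (simp add: list_update_append)
  qed
  also have "\<dots> = c * avg (as[i := x]) t"
    unfolding avg_def
    by (rule orbit_mean_scale[OF t probe_bounded]) (use as set_list_update_subset[OF as(2)] x t in auto)
  finally show ?thesis .
qed

lemma R_cochain: "cochain G E (n - 1) R"
  unfolding cochain_def
proof (intro conjI allI impI ballI)
  fix as assume "length as = n - 1" "set as \<subseteq> l1 (carrier G)"
  then show "R as \<in> dual E" by (rule R_dual)
next
  fix as i x y \<xi> assume as: "length as = n - 1" "set as \<subseteq> l1 (carrier G)" and i: "i < n - 1"
    and x: "x \<in> l1 (carrier G)" and y: "y \<in> l1 (carrier G)" and xi: "\<xi> \<in> l1 E"
  have upd: "length (as[i := v]) = n - 1" "set (as[i := v]) \<subseteq> l1 (carrier G)" if "v \<in> l1 (carrier G)" for v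
    using as set_list_update_subset[OF as(2) that] by auto
  have "pairing E (avg (as[i := (\<lambda>g. x g + y g)])) \<xi> = pairing E (\<lambda>t. avg (as[i := x]) t + avg (as[i := y]) t) \<xi>"
    unfolding pairing_def by (rule infsum_cong) (simp add: avg_add_slot[OF as i x y])
  also have "\<dots> = pairing E (avg (as[i := x])) \<xi> + pairing E (avg (as[i := y])) \<xi>"
    by (rule pairing_add_coeff[OF xi avg_bound[OF upd[OF x]] avg_bound[OF upd[OF y]]])
  finally show "R (as[i := (\<lambda>g. x g + y g)]) \<xi> = R (as[i := x]) \<xi> + R (as[i := y]) \<xi>"
    by (simp add: R_def distrib_left)
next
  fix as i c x \<xi> assume as: "length as = n - 1" "set as \<subseteq> l1 (carrier G)" and i: "i < n - 1"
    and x: "x \<in> l1 (carrier G)" and xi: "\<xi> \<in> l1 E"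
  have upd: "length (as[i := x]) = n - 1" "set (as[i := x]) \<subseteq> l1 (carrier G)"
    using as set_list_update_subset[OF as(2) x] by auto
  have "pairing E (avg (as[i := (\<lambda>g. c * x g)])) \<xi> = pairing E (\<lambda>t. c * avg (as[i := x]) t) \<xi>"
    unfolding pairing_def by (rule infsum_cong) (simp add: avg_scale_slot[OF as i x])
  also have "\<dots> = c * pairing E (avg (as[i := x])) \<xi>"
    by (rule pairing_scale_coeff[OF xi avg_bound[OF upd]])
  finally show "R (as[i := (\<lambda>g. c * x g)]) \<xi> = c * R (as[i := x]) \<xi>"
    by (simp add: R_def mult.left_commute)
next
  show "\<exists>C. \<forall>as. length as = n - 1 \<longrightarrow> set as \<subseteq> l1 (carrier G) \<longrightarrow>
        (\<forall>\<xi>\<in>l1 E. norm (R as \<xi>) \<le> C * prod_norm as * l1norm E \<xi>)"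
    using R_norm by blast
qed

end


section \<open>The coboundary of the primitive is the cocycle\<close>

context bounded_cocycle
begin

lemma arg_list_facts:
  assumes as: "length as = n" "set as \<subseteq> l1 (carrier G)"
  shows "length (tl as) = n - 1" "set (tl as) \<subseteq> l1 (carrier G)"
    "length (take (n - 1) as) = n - 1" "set (take (n - 1) as) \<subseteq> l1 (carrier G)"
    "\<And>i. i < n - 1 \<Longrightarrow> length (merge_at G i as) = n - 1"
    "\<And>i. i < n - 1 \<Longrightarrow> set (merge_at G i as) \<subseteq> l1 (carrier G)"
    "as ! 0 \<in> l1 (carrier G)" "as ! (n - 1) \<in> l1 (carrier G)"
proof -
  show "length (tl as) = n - 1" "length (take (n - 1) as) = n - 1" using as by simp_all
  show "set (tl as) \<subseteq> l1 (carrier G)" using as(2) by (cases as) auto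
  show "set (take (n - 1) as) \<subseteq> l1 (carrier G)" using as(2) by (meson order_trans set_take_subset)
  show "\<And>i. i < n - 1 \<Longrightarrow> length (merge_at G i as) = n - 1" using as(1) by (simp add: merge_at_def)
  show "\<And>i. i < n - 1 \<Longrightarrow> set (merge_at G i as) \<subseteq> l1 (carrier G)"
    using as by (intro set_merge_at) auto
  show "as ! 0 \<in> l1 (carrier G)" "as ! (n - 1) \<in> l1 (carrier G)"
    using as n_pos by (auto intro!: subsetD[OF as(2)] nth_mem)
qed

text \<open>The left action of a on the dual multiplies by the augmentation \<Sum> a, so the
  coboundary of R reads as follows.\<close>
lemma cobound_R_expand:
  assumes as: "length as = n" "set as \<subseteq> l1 (carrier G)" and xi: "\<xi> \<in> l1 E"
  shows "cobound G E \<phi> (n - 1) R as \<xi> = infsum (as ! 0) (carrier G) * R (tl as) \<xi>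
     + (\<Sum>i<n - 1. (-1) ^ (i + 1) * R (merge_at G i as) \<xi>)
     + (-1) ^ n * R (take (n - 1) as) (lact G E \<phi> (as ! (n - 1)) \<xi>)"
proof -
  note lf = arg_list_facts[OF as]
  have "dlact G (as ! 0) (R (tl as)) \<xi> = infsum (as ! 0) (carrier G) * R (tl as) \<xi>"
    unfolding dlact_def ract_def by (rule dual_scale[OF R_dual[OF lf(1,2)] xi])
  moreover have "n - 1 + 1 = n" using n_pos by simp
  ultimately show ?thesis unfolding cobound_def dract_def by simp
qed

lemma cobound_R_dual:
  assumes as: "length as = n" "set as \<subseteq> l1 (carrier G)"
  shows "cobound G E \<phi> (n - 1) R as \<in> dual E"
proof (rule dual_cong[OF _ cobound_R_expand[OF as]])
  note lf = arg_list_facts[OF as]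
  have "(\<lambda>\<xi>. \<Sum>i<n - 1. (-1) ^ (i + 1) * R (merge_at G i as) \<xi>) \<in> dual E"
    using lf(5,6) by (intro dual_sum dual_cmult R_dual) auto
  then show "(\<lambda>\<xi>. infsum (as ! 0) (carrier G) * R (tl as) \<xi>
      + (\<Sum>i<n - 1. (-1) ^ (i + 1) * R (merge_at G i as) \<xi>)
      + (-1) ^ n * R (take (n - 1) as) (lact G E \<phi> (as ! (n - 1)) \<xi>)) \<in> dual E"
    by (intro dual_plus dual_cmult R_dual dual_lact_right lf)
qed

lemma last_slot_dual:
  assumes bs: "length bs = n - 1" "set bs \<subseteq> l1 (carrier G)" and u: "u \<in> E" and x: "x \<in> carrier G"
  shows "(\<lambda>a. T (bs @ [conv G a (delta x)]) (delta (\<phi> (inv x) u))) \<in> dual (carrier G)"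
    and "a \<in> l1 (carrier G) \<Longrightarrow>
      norm (T (bs @ [conv G a (delta x)]) (delta (\<phi> (inv x) u))) \<le> T_bound * prod_norm bs * l1norm (carrier G) a"
proof -
  have v: "delta (\<phi> (inv x) u) \<in> l1 E"
    using act_closed x u group.inv_closed[OF is_group] by (simp add: l1_delta)
  have len: "length (bs @ [c]) = n" "length bs < n" for c using bs n_pos by auto
  have set: "set (bs @ [conv G a (delta x)]) \<subseteq> l1 (carrier G)" if "a \<in> l1 (carrier G)" for a
    using bs conv_delta_l1(1)[OF that x] by simp
  show bound: "norm (T (bs @ [conv G a (delta x)]) (delta (\<phi> (inv x) u)))
      \<le> T_bound * prod_norm bs * l1norm (carrier G) a" if a: "a \<in> l1 (carrier G)" for a
  proof -
    have "norm (T (bs @ [conv G a (delta x)]) (delta (\<phi> (inv x) u)))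
        \<le> T_bound * prod_norm (bs @ [conv G a (delta x)]) * l1norm E (delta (\<phi> (inv x) u))"
      by (rule T_norm[OF len(1) set[OF a] v])
    also have "\<dots> = T_bound * prod_norm bs * l1norm (carrier G) a"
      using conv_delta_l1(2)[OF a x] act_closed x u group.inv_closed[OF is_group] by (simp add: l1norm_delta)
    finally show ?thesis .
  qed
  show "(\<lambda>a. T (bs @ [conv G a (delta x)]) (delta (\<phi> (inv x) u))) \<in> dual (carrier G)"
  proof (rule dualI[OF _ _ bound])
    fix a b assume a: "a \<in> l1 (carrier G)" and b: "b \<in> l1 (carrier G)"
    have "conv G (\<lambda>s. a s + b s) (delta x) = (\<lambda>g. conv G a (delta x) g + conv G b (delta x) g)"
      using x by (auto simp: conv_delta)
    then show "T (bs @ [conv G (\<lambda>s. a s + b s) (delta x)]) (delta (\<phi> (inv x) u)) =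
        T (bs @ [conv G a (delta x)]) (delta (\<phi> (inv x) u)) + T (bs @ [conv G b (delta x)]) (delta (\<phi> (inv x) u))"
      using T_add[OF len(1) set[OF a] len(2) conv_delta_l1(1)[OF a x] conv_delta_l1(1)[OF b x] v] by simp
  next
    fix c a assume a: "a \<in> l1 (carrier G)"
    have "conv G (\<lambda>s. c * a s) (delta x) = (\<lambda>g. c * conv G a (delta x) g)"
      using x by (auto simp: conv_delta)
    then show "T (bs @ [conv G (\<lambda>s. c * a s) (delta x)]) (delta (\<phi> (inv x) u)) =
        c * T (bs @ [conv G a (delta x)]) (delta (\<phi> (inv x) u))"
      using T_scale[OF len(1) set[OF a] len(2) conv_delta_l1(1)[OF a x] v] by simp
  qed
qed

text \<open>The orbit mean of the last-slot probe.  On a point mass \<delta>_g it is avg(b)(g.u),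
  by equivariance of the orbit means; hence it expands as \<Sum>_g a(g) avg(b)(g.u).\<close>
definition last_slot_mean :: "('a \<Rightarrow> complex) list \<Rightarrow> 'c \<Rightarrow> ('a \<Rightarrow> complex) \<Rightarrow> complex" where
  "last_slot_mean bs u a = orbit_mean u (\<lambda>x. T (bs @ [conv G a (delta x)]) (delta (\<phi> (inv x) u)))"

lemma last_slot_mean_dual:
  "length bs = n - 1 \<Longrightarrow> set bs \<subseteq> l1 (carrier G) \<Longrightarrow> u \<in> E \<Longrightarrow> last_slot_mean bs u \<in> dual (carrier G)"
  unfolding last_slot_mean_def[abs_def] by (rule orbit_mean_dual) (auto intro: last_slot_dual)

lemma last_slot_mean_delta:
  assumes bs: "length bs = n - 1" "set bs \<subseteq> l1 (carrier G)" and u: "u \<in> E" and g: "g \<in> carrier G"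
  shows "last_slot_mean bs u (delta g) = avg bs (\<phi> g u)"
proof -
  interpret group G by (rule is_group)
  have gu: "\<phi> g u \<in> E" using act_closed g u by simp
  have "last_slot_mean bs u (delta g) = orbit_mean u (\<lambda>x. probe bs (\<phi> g u) (g \<otimes> x))"
    unfolding last_slot_mean_def
  proof (rule orbit_mean_cong[OF u])
    show "cbounded_on (carrier G) (\<lambda>x. T (bs @ [conv G (delta g) (delta x)]) (delta (\<phi> (inv x) u)))"
      using last_slot_dual(2)[OF bs u _ l1_delta[OF g]] by (rule cbounded_on_bound)
    fix x assume x: "x \<in> carrier G"
    have "\<phi> (inv (g \<otimes> x)) (\<phi> g u) = \<phi> (inv x) (\<phi> (inv g) (\<phi> g u))"
      using g x u act_comp act_closed by (simp add: inv_mult_group)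
    also have "\<dots> = \<phi> (inv x) u" using act_inv g u by simp
    finally show "T (bs @ [conv G (delta g) (delta x)]) (delta (\<phi> (inv x) u)) = probe bs (\<phi> g u) (g \<otimes> x)"
      unfolding probe_def conv_delta_delta[OF g x] by simp
  qed
  also have "\<dots> = avg bs (\<phi> g u)"
    unfolding avg_def by (rule orbit_mean_equivariant[symmetric, OF g u probe_bounded[OF bs gu]])
  finally show ?thesis .
qed

lemma last_slot_mean_expansion:
  assumes bs: "length bs = n - 1" "set bs \<subseteq> l1 (carrier G)" and u: "u \<in> E" and a: "a \<in> l1 (carrier G)"
  shows "((\<lambda>g. a g * avg bs (\<phi> g u)) has_sum last_slot_mean bs u a) (carrier G)"
  using dual_expansion[OF last_slot_mean_dual[OF bs u] a]
  by (rule has_sum_cong[THEN iffD1, rotated]) (simp add: last_slot_mean_delta[OF bs u])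

lemma R_last_slot:
  assumes bs: "length bs = n - 1" "set bs \<subseteq> l1 (carrier G)" and u: "u \<in> E" and a: "a \<in> l1 (carrier G)"
  shows "R bs (lact G E \<phi> a (delta u)) = (-1) ^ n * last_slot_mean bs u a"
proof -
  have "((\<lambda>g. a g * R bs (lact G E \<phi> (delta g) (delta u))) has_sum R bs (lact G E \<phi> a (delta u))) (carrier G)"
    by (rule dual_expansion[OF dual_lact_left[OF R_dual[OF bs] l1_delta[OF u]] a])
  then have "((\<lambda>g. (-1) ^ n * (a g * avg bs (\<phi> g u))) has_sum R bs (lact G E \<phi> a (delta u))) (carrier G)"
    by (rule has_sum_cong[THEN iffD1, rotated])
       (simp add: lact_delta_delta u R_delta[OF bs] act_closed mult_ac)
  moreover have "((\<lambda>g. (-1) ^ n * (a g * avg bs (\<phi> g u))) has_sum (-1) ^ n * last_slot_mean bs u a) (carrier G)"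
    by (rule has_sum_cmult_right[OF last_slot_mean_expansion[OF bs u a]])
  ultimately show ?thesis by (rule has_sum_unique)
qed

text \<open>The cocycle identity of T at (a_0, ..., a_{n-1}, \<delta>_x), evaluated at \<delta>_{x^-1.u}.\<close>
lemma cocycle_at_deltas:
  assumes as: "length as = n" "set as \<subseteq> l1 (carrier G)" and u: "u \<in> E" and x: "x \<in> carrier G"
  shows "infsum (as ! 0) (carrier G) * probe (tl as) u x
     + (\<Sum>i<n - 1. (-1) ^ (i + 1) * probe (merge_at G i as) u x)
     + (-1) ^ n * T (take (n - 1) as @ [conv G (as ! (n - 1)) (delta x)]) (delta (\<phi> (inv x) u))
     = (-1) ^ n * T as (delta u)"
proof -
  interpret group G by (rule is_group)
  note lf = arg_list_facts[OF as]
  obtain m where nm: "n = Suc m" using n_pos by (cases n) auto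
  define v where "v = \<phi> (inv x) u"
  have v: "v \<in> E" using act_closed x u by (simp add: v_def)
  let ?bs = "as @ [delta x]"
  have "cobound G E \<phi> n T ?bs (delta v) = 0"
    using T_cocycle as l1_delta[OF x] l1_delta[OF v] by simp
  moreover have "dlact G (?bs ! 0) (T (tl ?bs)) (delta v) = infsum (as ! 0) (carrier G) * probe (tl as) u x"
  proof -
    have "as \<noteq> []" using as n_pos by auto
    then have "tl ?bs = tl as @ [delta x]" "?bs ! 0 = as ! 0" by (simp_all add: nth_append)
    moreover have "T (tl as @ [delta x]) (\<lambda>s. infsum (as ! 0) (carrier G) * delta v s)
        = infsum (as ! 0) (carrier G) * T (tl as @ [delta x]) (delta v)"
      by (rule dual_scale[OF T_dual l1_delta[OF v]]) (use lf(1,2) l1_delta[OF x] n_pos in auto)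
    ultimately show ?thesis unfolding dlact_def ract_def probe_def v_def by simp
  qed
  moreover have "(\<Sum>i<n. (-1) ^ (i + 1) * T (merge_at G i ?bs) (delta v))
    = (\<Sum>i<n - 1. (-1) ^ (i + 1) * probe (merge_at G i as) u x)
      + (-1) ^ n * T (take (n - 1) as @ [conv G (as ! (n - 1)) (delta x)]) (delta v)"
  proof -
    have "merge_at G i ?bs = merge_at G i as @ [delta x]" if "i < m" for i
      using that as nm by (simp add: merge_at_def nth_append)
    moreover have "merge_at G m ?bs = take m as @ [conv G (as ! m) (delta x)]"
      using as nm by (simp add: merge_at_def nth_append)
    ultimately show ?thesis unfolding nm by (simp add: probe_def v_def)
  qed
  moreover have "dract G E \<phi> (T (take n ?bs)) (?bs ! n) (delta v) = T as (delta u)"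
  proof -
    have "lact G E \<phi> (delta x) (delta v) = delta u"
      using lact_delta_delta[OF x v] act_inv' x u by (simp add: v_def)
    then show ?thesis using as(1) by (simp add: dract_def nth_append)
  qed
  ultimately show ?thesis unfolding cobound_def v_def by (simp add: algebra_simps)
qed

lemma orbit_mean_merge_terms:
  assumes as: "length as = n" "set as \<subseteq> l1 (carrier G)" and u: "u \<in> E"
  shows "orbit_mean u (\<lambda>x. \<Sum>i<n - 1. (-1) ^ (i + 1) * probe (merge_at G i as) u x)
     = (\<Sum>i<n - 1. (-1) ^ (i + 1) * avg (merge_at G i as) u)"
proof -
  note lf = arg_list_facts[OF as]
  have bdd: "cbounded_on (carrier G) (\<lambda>x. (-1) ^ (i + 1) * probe (merge_at G i as) u x)"
    if "i \<in> {..<n - 1}" for i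
    using that lf(5,6) by (intro cbounded_on_scale probe_bounded u) auto
  have "orbit_mean u (\<lambda>x. \<Sum>i<n - 1. (-1) ^ (i + 1) * probe (merge_at G i as) u x)
      = (\<Sum>i<n - 1. orbit_mean u (\<lambda>x. (-1) ^ (i + 1) * probe (merge_at G i as) u x))"
    by (rule orbit_mean_sum[OF u _ bdd]) simp
  also have "\<dots> = (\<Sum>i<n - 1. (-1) ^ (i + 1) * avg (merge_at G i as) u)"
  proof (rule sum.cong)
    fix i assume "i \<in> {..<n - 1}"
    then show "orbit_mean u (\<lambda>x. (-1) ^ (i + 1) * probe (merge_at G i as) u x)
        = (-1) ^ (i + 1) * avg (merge_at G i as) u"
      unfolding avg_def using lf(5,6) by (intro orbit_mean_scale[OF u] probe_bounded[OF _ _ u]) auto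
  qed simp
  finally show ?thesis .
qed

lemma averaged_cocycle:
  assumes as: "length as = n" "set as \<subseteq> l1 (carrier G)" and u: "u \<in> E"
  shows "infsum (as ! 0) (carrier G) * avg (tl as) u
     + (\<Sum>i<n - 1. (-1) ^ (i + 1) * avg (merge_at G i as) u)
     + (-1) ^ n * last_slot_mean (take (n - 1) as) u (as ! (n - 1))
     = (-1) ^ n * T as (delta u)"
proof -
  note lf = arg_list_facts[OF as]
  let ?e = "infsum (as ! 0) (carrier G)"
  let ?A = "\<lambda>x. ?e * probe (tl as) u x"
  let ?B = "\<lambda>x. \<Sum>i<n - 1. (-1) ^ (i + 1) * probe (merge_at G i as) u x"
  let ?C = "\<lambda>x. (-1) ^ n * T (take (n - 1) as @ [conv G (as ! (n - 1)) (delta x)]) (delta (\<phi> (inv x) u))"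
  have A: "cbounded_on (carrier G) ?A" by (rule cbounded_on_scale[OF probe_bounded[OF lf(1,2) u]])
  have Bi: "cbounded_on (carrier G) (\<lambda>x. (-1) ^ (i + 1) * probe (merge_at G i as) u x)"
    if "i \<in> {..<n - 1}" for i
    using that lf(5,6) by (intro cbounded_on_scale probe_bounded u) auto
  have B: "cbounded_on (carrier G) ?B" by (rule cbounded_on_sum[OF _ Bi]) simp
  have C: "cbounded_on (carrier G) ?C"
    using last_slot_dual(2)[OF lf(3,4) u _ lf(8)] by (intro cbounded_on_scale cbounded_on_bound)
  have "(-1) ^ n * T as (delta u) = orbit_mean u (\<lambda>x. ?A x + ?B x + ?C x)"
    using cocycle_at_deltas[OF as u] orbit_mean_cong[OF u, of "\<lambda>x. (-1) ^ n * T as (delta u)"]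
    by (simp add: orbit_mean_const[OF u] cbounded_on_bound[of _ _ "norm ((-1) ^ n * T as (delta u))"])
  also have "\<dots> = orbit_mean u (\<lambda>x. ?A x + ?B x) + orbit_mean u ?C"
    by (rule orbit_mean_add[OF u cbounded_on_add[OF A B] C])
  also have "orbit_mean u (\<lambda>x. ?A x + ?B x) = orbit_mean u ?A + orbit_mean u ?B"
    by (rule orbit_mean_add[OF u A B])
  also have "orbit_mean u ?A = ?e * avg (tl as) u"
    unfolding avg_def by (rule orbit_mean_scale[OF u probe_bounded[OF lf(1,2) u]])
  also have "orbit_mean u ?B = (\<Sum>i<n - 1. (-1) ^ (i + 1) * avg (merge_at G i as) u)"
    by (rule orbit_mean_merge_terms[OF as u])
  also have "orbit_mean u ?C = (-1) ^ n * last_slot_mean (take (n - 1) as) u (as ! (n - 1))"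
    unfolding last_slot_mean_def
    by (rule orbit_mean_scale[OF u]) (use last_slot_dual(2)[OF lf(3,4) u _ lf(8)] in \<open>rule cbounded_on_bound\<close>)
  finally show ?thesis by simp
qed

text \<open>Hence (\<delta>R)(a)(\<delta>_u) = T(a)(\<delta>_u): the coboundary is computed term by term,
  and the sign (-1)^n appears twice.\<close>
lemma cobound_R_delta:
  assumes as: "length as = n" "set as \<subseteq> l1 (carrier G)" and u: "u \<in> E"
  shows "cobound G E \<phi> (n - 1) R as (delta u) = T as (delta u)"
proof -
  note lf = arg_list_facts[OF as]
  let ?p = "(-1::complex) ^ n"
  have "(\<Sum>i<n - 1. (-1) ^ (i + 1) * R (merge_at G i as) (delta u))
      = ?p * (\<Sum>i<n - 1. (-1) ^ (i + 1) * avg (merge_at G i as) u)"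
    unfolding sum_distrib_left
  proof (rule sum.cong)
    fix i assume "i \<in> {..<n - 1}"
    then show "(-1) ^ (i + 1) * R (merge_at G i as) (delta u) = ?p * ((-1) ^ (i + 1) * avg (merge_at G i as) u)"
      using R_delta[OF lf(5) lf(6) u] by simp
  qed simp
  then have "cobound G E \<phi> (n - 1) R as (delta u) = ?p * (infsum (as ! 0) (carrier G) * avg (tl as) u
      + (\<Sum>i<n - 1. (-1) ^ (i + 1) * avg (merge_at G i as) u)
      + ?p * last_slot_mean (take (n - 1) as) u (as ! (n - 1)))"
    unfolding cobound_R_expand[OF as l1_delta[OF u]] R_last_slot[OF lf(3,4) u lf(8)] R_delta[OF lf(1,2) u]
    by (simp add: distrib_left)
  also have "\<dots> = ?p * ?p * T as (delta u)" unfolding averaged_cocycle[OF as u] by (simp only: mult.assoc)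
  also have "?p * ?p = 1" by (simp add: power_mult_distrib[symmetric])
  finally show ?thesis by simp
qed

lemma cobound_R:
  assumes "length as = n" "set as \<subseteq> l1 (carrier G)" "\<xi> \<in> l1 E"
  shows "cobound G E \<phi> (n - 1) R as \<xi> = T as \<xi>"
  by (rule dual_eq_on_deltas[OF cobound_R_dual[OF assms(1,2)] T_dual[OF assms(1,2)] cobound_R_delta[OF assms(1,2)] assms(3)])

end

theorem corollary4p2:
  fixes G :: "('g, 'b) monoid_scheme" and S :: "'s set" and \<phi> :: "'g \<Rightarrow> 's \<Rightarrow> 's"
  assumes "group_action G S \<phi>"
    and "\<forall>s\<in>S. amenable_group (G\<lparr>carrier := stabilizer G \<phi> s\<rparr>)"
    and "n \<ge> 1"
  shows "hochschild_vanishes G S \<phi> n"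
  unfolding hochschild_vanishes_def
proof (intro allI impI)
  fix T assume "cochain G S n T"
    and "\<forall>as. length as = Suc n \<longrightarrow> set as \<subseteq> l1 (carrier G) \<longrightarrow> (\<forall>\<xi>\<in>l1 S. cobound G S \<phi> n T as \<xi> = 0)"
  then interpret bounded_cocycle G S \<phi> n T
    by (intro bounded_cocycle.intro amenable_stabilizers.intro amenable_stabilizers_axioms.intro
          bounded_cocycle_axioms.intro assms)
  show "\<exists>R. cochain G S (n - 1) R \<and>
          (\<forall>as. length as = n \<longrightarrow> set as \<subseteq> l1 (carrier G) \<longrightarrow>
             (\<forall>\<xi>\<in>l1 S. cobound G S \<phi> (n - 1) R as \<xi> = T as \<xi>))"
    using R_cochain cobound_R by blast
qed

end
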